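(* Let $n\ge 3$, $4\le m<\infty$, $I=\{1,\dots,n\}$, $\Gamma$ an $n$-dimensional vector space over a countably infinite skew field, and $\Delta_0=(V,\tau,* )$ as below. Let $\Delta=(W,\tau,* )$ be a geometry over $I$ containing $\Delta_0$ as an induced subgeometry and satisfying Properties (F), (I), (V), (P), (H), (C). Let $z$ be an element of type $n-2$ and let $x,y$ be elements of types in $\{n-1,n\}$ incident with $z$, of the same type if $m$ is odd and of different types if $m$ is even, at distance at least $m+1$ (possibly infinite) in the incidence graph of the rank 2 geometry of elements of types $n-1,n$ incident with $z$. Construct $\Delta'=(W',\tau,* )$ as follows. Consider a path $\gamma=(x_0:=x,x_1,\dots,x_{m-2},x_{m-1}:=y)$ with types alternating between $n-1$ and $n$. If $x$ has type $n$, $x_1$ is taken to be an existing element of type $n-1$ incident with $x$ and $z$ such that $x$ is the only type-$n$ element incident with $x_1$ (such an element exists); similarly, if $y$ has type $n$, $x_{m-2}$ is an existing element of type $n-1$ incident with $y$ and $z$ such that $y$ is the only type-$n$ element incident with it. All other inner vertices of $\gamma$ are new elements. To each new element of type $n-1$ on $\gamma$ assign a precursor: an element of type $n-1$ of $\Delta_0$ incident with $z$, chosen so that the type-$(n-1)$ elements of $\gamma$ have pairwise distinct precursors. A new type-$(n-1)$ element of $\gamma$ is incident exactly with its neighbours on $\gamma$ and with the elements of type $\le n-2$ incident with its precursor. Further, for each new element $x_i$ of type $n$ on $\gamma$ and each element $a$ of type $n-1$ of $\Delta_0$ that is not the precursor of $x_{i-1}$ or $x_{i+1}$, add a new element of type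 $n-1$ with precursor $a$, incident exactly with $x_i$ and with the elements of type $\le n-2$ incident with $a$. Each new element of type $n$ is incident exactly with its neighbours on $\gamma$, all elements of type $\le n-2$, and the new type-$(n-1)$ elements attached to it in the previous sentence. Incidences among elements of $W$ are unchanged. Then $\Delta'$ satisfies Properties (F), (I), (V), (P), (H), (C).
   Context: A geometry over $I$ is a triple $(V,\tau,* )$ with $\tau:V\to I$ and $*$ a symmetric relation such that elements of equal type are incident iff equal. A rank 2 geometry (bipartite incidence graph) is without $k$-gons if it has no cycle of length $2k$. $\Delta_0=(V,\tau,* )$ is the geometry over $I$ whose elements of type $i<n$ are the $i$-dimensional subspaces of $\Gamma$, with no elements of type $n$, two elements being incident iff one subspace contains the other. Properties of $\Delta=(W,\tau,* )\supseteq\Delta_0$: (F) Elements of types $i$ and $n$ with $i\le n-2$ are always incident. (I) There are finitely many elements of type $n$, and $W$ is countable. (V) Every element of $W\setminus V$ has type $n-1$ or $n$. (P) For every element $z$ of type $n-2$, the elements of types $n-1$ and $n$ incident with $z$ form a rank 2 geometry without $k$-gons for all $k<m$. (H) For every element $x$ of type $n-1$, there is an element $y$ of type $n-1$ of $\Delta_0$ (the precursor of $x$) such that $x$ and $y$ are incident with exactly the same elements of types $1,\dots,n-2$. (C) For every element $x$ of type $n$ and every element $y$ of type $n-1$ of $\Delta_0$, there is a unique element of type $n-1$ with precursor $y$ incident with $x$. *)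

theory Defs
  imports Main "HOL-Library.Countable_Set"
begin

definition geometry :: "nat set \<Rightarrow> 'e set \<Rightarrow> ('e \<Rightarrow> nat) \<Rightarrow> ('e \<Rightarrow> 'e \<Rightarrow> bool) \<Rightarrow> bool" where
  "geometry I W tp inc \<longleftrightarrow>
     (\<forall>a\<in>W. tp a \<in> I) \<and>
     (\<forall>a\<in>W. \<forall>b\<in>W. inc a b \<longleftrightarrow> inc b a) \<and>
     (\<forall>a\<in>W. \<forall>b\<in>W. tp a = tp b \<longrightarrow> (inc a b \<longleftrightarrow> a = b))"

definition res_vertices :: "nat \<Rightarrow> 'e set \<Rightarrow> ('e \<Rightarrow> nat) \<Rightarrow> ('e \<Rightarrow> 'e \<Rightarrow> bool) \<Rightarrow> 'e \<Rightarrow> 'e set" where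
  "res_vertices n W tp inc z = {w\<in>W. (tp w = n - 1 \<or> tp w = n) \<and> inc w z}"

definition res_adj :: "nat \<Rightarrow> 'e set \<Rightarrow> ('e \<Rightarrow> nat) \<Rightarrow> ('e \<Rightarrow> 'e \<Rightarrow> bool) \<Rightarrow> 'e \<Rightarrow> 'e \<Rightarrow> 'e \<Rightarrow> bool" where
  "res_adj n W tp inc z a b \<longleftrightarrow>
     a \<in> res_vertices n W tp inc z \<and> b \<in> res_vertices n W tp inc z \<and> tp a \<noteq> tp b \<and> inc a b"

definition res_walk :: "nat \<Rightarrow> 'e set \<Rightarrow> ('e \<Rightarrow> nat) \<Rightarrow> ('e \<Rightarrow> 'e \<Rightarrow> bool) \<Rightarrow> 'e \<Rightarrow> nat \<Rightarrow> 'e \<Rightarrow> 'e \<Rightarrow> bool" where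
  "res_walk n W tp inc z L a b \<longleftrightarrow>
     (\<exists>p. p 0 = a \<and> p L = b \<and> (\<forall>i\<le>L. p i \<in> res_vertices n W tp inc z) \<and>
          (\<forall>i<L. res_adj n W tp inc z (p i) (p (Suc i))))"

definition res_cycle :: "nat \<Rightarrow> 'e set \<Rightarrow> ('e \<Rightarrow> nat) \<Rightarrow> ('e \<Rightarrow> 'e \<Rightarrow> bool) \<Rightarrow> 'e \<Rightarrow> nat \<Rightarrow> bool" where
  "res_cycle n W tp inc z L \<longleftrightarrow>
     3 \<le> L \<and> (\<exists>p. inj_on p {..<L} \<and> (\<forall>i<L. res_adj n W tp inc z (p i) (p (Suc i mod L))))"

section \<open>Properties (F), (I), (V), (P), (H), (C); V is the set of elements of Delta_0\<close>

definition prop_F :: "nat \<Rightarrow> 'e set \<Rightarrow> ('e \<Rightarrow> nat) \<Rightarrow> ('e \<Rightarrow> 'e \<Rightarrow> bool) \<Rightarrow> bool" where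
  "prop_F n W tp inc \<longleftrightarrow> (\<forall>a\<in>W. \<forall>b\<in>W. tp a \<le> n - 2 \<and> tp b = n \<longrightarrow> inc a b)"

definition prop_I :: "nat \<Rightarrow> 'e set \<Rightarrow> ('e \<Rightarrow> nat) \<Rightarrow> bool" where
  "prop_I n W tp \<longleftrightarrow> finite {w\<in>W. tp w = n} \<and> countable W"

definition prop_V :: "nat \<Rightarrow> 'e set \<Rightarrow> 'e set \<Rightarrow> ('e \<Rightarrow> nat) \<Rightarrow> bool" where
  "prop_V n V W tp \<longleftrightarrow> (\<forall>w\<in>W - V. tp w = n - 1 \<or> tp w = n)"

definition prop_P :: "nat \<Rightarrow> nat \<Rightarrow> 'e set \<Rightarrow> ('e \<Rightarrow> nat) \<Rightarrow> ('e \<Rightarrow> 'e \<Rightarrow> bool) \<Rightarrow> bool" where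
  "prop_P n m W tp inc \<longleftrightarrow>
     (\<forall>z\<in>W. tp z = n - 2 \<longrightarrow> (\<forall>k<m. \<not> res_cycle n W tp inc z (2 * k)))"

definition is_precursor :: "nat \<Rightarrow> 'e set \<Rightarrow> 'e set \<Rightarrow> ('e \<Rightarrow> nat) \<Rightarrow> ('e \<Rightarrow> 'e \<Rightarrow> bool) \<Rightarrow> 'e \<Rightarrow> 'e \<Rightarrow> bool" where
  "is_precursor n V W tp inc a b \<longleftrightarrow>
     b \<in> V \<and> tp b = n - 1 \<and>
     (\<forall>e\<in>W. 1 \<le> tp e \<and> tp e \<le> n - 2 \<longrightarrow> (inc a e \<longleftrightarrow> inc b e))"

definition prop_H :: "nat \<Rightarrow> 'e set \<Rightarrow> 'e set \<Rightarrow> ('e \<Rightarrow> nat) \<Rightarrow> ('e \<Rightarrow> 'e \<Rightarrow> bool) \<Rightarrow> bool" where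
  "prop_H n V W tp inc \<longleftrightarrow> (\<forall>a\<in>W. tp a = n - 1 \<longrightarrow> (\<exists>b. is_precursor n V W tp inc a b))"

definition prop_C :: "nat \<Rightarrow> 'e set \<Rightarrow> 'e set \<Rightarrow> ('e \<Rightarrow> nat) \<Rightarrow> ('e \<Rightarrow> 'e \<Rightarrow> bool) \<Rightarrow> bool" where
  "prop_C n V W tp inc \<longleftrightarrow>
     (\<forall>a\<in>W. tp a = n \<longrightarrow> (\<forall>b\<in>V. tp b = n - 1 \<longrightarrow>
        (\<exists>!w. w \<in> W \<and> tp w = n - 1 \<and> is_precursor n V W tp inc w b \<and> inc w a)))"

definition all_props :: "nat \<Rightarrow> nat \<Rightarrow> 'e set \<Rightarrow> 'e set \<Rightarrow> ('e \<Rightarrow> nat) \<Rightarrow> ('e \<Rightarrow> 'e \<Rightarrow> bool) \<Rightarrow> bool" where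
  "all_props n m V W tp inc \<longleftrightarrow>
     prop_F n W tp inc \<and> prop_I n W tp \<and> prop_V n V W tp \<and> prop_P n m W tp inc \<and>
     prop_H n V W tp inc \<and> prop_C n V W tp inc"

section \<open>Subspaces of K^n over a skew field K (left vector space)\<close>

definition vecs :: "nat \<Rightarrow> (nat \<Rightarrow> 'k::division_ring) set" where
  "vecs n = {v. \<forall>i\<ge>n. v i = 0}"

definition lincomb :: "nat \<Rightarrow> (nat \<Rightarrow> 'k::division_ring) \<Rightarrow> (nat \<Rightarrow> nat \<Rightarrow> 'k) \<Rightarrow> (nat \<Rightarrow> 'k)" where
  "lincomb d c b = (\<lambda>j. \<Sum>i<d. c i * b i j)"

definition lin_indep :: "nat \<Rightarrow> (nat \<Rightarrow> nat \<Rightarrow> 'k::division_ring) \<Rightarrow> bool" where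
  "lin_indep d b \<longleftrightarrow> (\<forall>c. lincomb d c b = (\<lambda>_. 0) \<longrightarrow> (\<forall>i<d. c i = 0))"

definition lspan :: "nat \<Rightarrow> (nat \<Rightarrow> nat \<Rightarrow> 'k::division_ring) \<Rightarrow> (nat \<Rightarrow> 'k) set" where
  "lspan d b = {lincomb d c b | c. True}"

definition subspace_dim :: "nat \<Rightarrow> nat \<Rightarrow> (nat \<Rightarrow> 'k::division_ring) set \<Rightarrow> bool" where
  "subspace_dim n d U \<longleftrightarrow> U \<subseteq> vecs n \<and> (\<exists>b. lin_indep d b \<and> lspan d b = U)"

datatype 'e newel = PathV nat | Att nat 'e

text \<open>Type of the i-th vertex of the path gamma (x_0 = x).\<close>
definition ptype :: "nat \<Rightarrow> nat \<Rightarrow> nat \<Rightarrow> nat" where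
  "ptype n tpx i = (if even i = (tpx = n) then n else n - 1)"

definition is_new :: "nat \<Rightarrow> nat \<Rightarrow> nat \<Rightarrow> nat \<Rightarrow> nat \<Rightarrow> bool" where
  "is_new n m tpx tpy i \<longleftrightarrow>
     1 \<le> i \<and> i \<le> m - 2 \<and> \<not> (i = 1 \<and> tpx = n) \<and> \<not> (i = m - 2 \<and> tpy = n)"

text \<open>The i-th vertex of gamma; c1, c2 are the chosen existing x_1, x_{m-2}.\<close>
definition pv :: "nat \<Rightarrow> nat \<Rightarrow> ('e \<Rightarrow> nat) \<Rightarrow> 'e \<Rightarrow> 'e \<Rightarrow> 'e \<Rightarrow> 'e \<Rightarrow> nat \<Rightarrow> 'e + 'e newel" where
  "pv n m tp x y c1 c2 i =
     (if i = 0 then Inl x else if i = m - 1 then Inl y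
      else if i = 1 \<and> tp x = n then Inl c1
      else if i = m - 2 \<and> tp y = n then Inl c2
      else Inr (PathV i))"

definition ext_W :: "nat \<Rightarrow> nat \<Rightarrow> 'e set \<Rightarrow> 'e set \<Rightarrow> ('e \<Rightarrow> nat) \<Rightarrow> 'e \<Rightarrow> 'e \<Rightarrow> (nat \<Rightarrow> 'e) \<Rightarrow> ('e + 'e newel) set" where
  "ext_W n m V W tp x y prec =
     Inl ` W
     \<union> {Inr (PathV i) | i. is_new n m (tp x) (tp y) i}
     \<union> {Inr (Att i a) | i a. is_new n m (tp x) (tp y) i \<and> ptype n (tp x) i = n \<and>
          a \<in> V \<and> tp a = n - 1 \<and> a \<noteq> prec (i - 1) \<and> a \<noteq> prec (Suc i)}"

definition ext_tp :: "nat \<Rightarrow> ('e \<Rightarrow> nat) \<Rightarrow> 'e \<Rightarrow> ('e + 'e newel) \<Rightarrow> nat" where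
  "ext_tp n tp x u = (case u of Inl e \<Rightarrow> tp e
                        | Inr (PathV i) \<Rightarrow> ptype n (tp x) i
                        | Inr (Att i a) \<Rightarrow> n - 1)"

text \<open>New incidences from a new element u to v (before symmetrisation).\<close>
definition new_inc :: "nat \<Rightarrow> nat \<Rightarrow> ('e \<Rightarrow> nat) \<Rightarrow> ('e \<Rightarrow> 'e \<Rightarrow> bool) \<Rightarrow> 'e \<Rightarrow> 'e \<Rightarrow> 'e \<Rightarrow> 'e
    \<Rightarrow> (nat \<Rightarrow> 'e) \<Rightarrow> ('e + 'e newel) \<Rightarrow> ('e + 'e newel) \<Rightarrow> bool" where
  "new_inc n m tp inc x y c1 c2 prec u v \<longleftrightarrow>
     (\<exists>i. Suc i \<le> m - 1 \<and> u = pv n m tp x y c1 c2 i \<and> v = pv n m tp x y c1 c2 (Suc i)) \<or>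
     (\<exists>i e. u = Inr (PathV i) \<and> v = Inl e \<and> tp e \<le> n - 2 \<and>
            (ptype n (tp x) i = n \<or> inc e (prec i))) \<or>
     (\<exists>i a. u = Inr (Att i a) \<and>
            (v = Inr (PathV i) \<or> (\<exists>e. v = Inl e \<and> tp e \<le> n - 2 \<and> inc e a)))"

definition ext_inc :: "nat \<Rightarrow> nat \<Rightarrow> ('e \<Rightarrow> nat) \<Rightarrow> ('e \<Rightarrow> 'e \<Rightarrow> bool) \<Rightarrow> 'e \<Rightarrow> 'e \<Rightarrow> 'e \<Rightarrow> 'e
    \<Rightarrow> (nat \<Rightarrow> 'e) \<Rightarrow> ('e + 'e newel) \<Rightarrow> ('e + 'e newel) \<Rightarrow> bool" where
  "ext_inc n m tp inc x y c1 c2 prec u v \<longleftrightarrow>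
     (case (u, v) of
        (Inl a, Inl b) \<Rightarrow> inc a b
      | _ \<Rightarrow> u = v \<or> new_inc n m tp inc x y c1 c2 prec u v \<or> new_inc n m tp inc x y c1 c2 prec v u)"

text \<open>Admissible choice of an existing x_1 (resp. x_{m-2}) next to the endpoint x of type n.\<close>
definition end_ok :: "nat \<Rightarrow> 'e set \<Rightarrow> ('e \<Rightarrow> nat) \<Rightarrow> ('e \<Rightarrow> 'e \<Rightarrow> bool) \<Rightarrow> 'e \<Rightarrow> 'e \<Rightarrow> 'e \<Rightarrow> bool" where
  "end_ok n W tp inc z x c \<longleftrightarrow>
     c \<in> W \<and> tp c = n - 1 \<and> inc c x \<and> inc c z \<and> (\<forall>w\<in>W. tp w = n \<and> inc c w \<longrightarrow> w = x)"

text \<open>Admissible precursor assignment along gamma: prec i is the precursor of the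
type-(n-1) vertex x_i (for existing vertices it is their precursor in Delta).\<close>
definition prec_ok :: "nat \<Rightarrow> nat \<Rightarrow> 'e set \<Rightarrow> 'e set \<Rightarrow> ('e \<Rightarrow> nat) \<Rightarrow> ('e \<Rightarrow> 'e \<Rightarrow> bool)
    \<Rightarrow> 'e \<Rightarrow> 'e \<Rightarrow> 'e \<Rightarrow> 'e \<Rightarrow> 'e \<Rightarrow> (nat \<Rightarrow> 'e) \<Rightarrow> bool" where
  "prec_ok n m V W tp inc z x y c1 c2 prec \<longleftrightarrow>
     (\<forall>i\<le>m - 1. ptype n (tp x) i = n - 1 \<longrightarrow>
        (case pv n m tp x y c1 c2 i of
           Inl e \<Rightarrow> is_precursor n V W tp inc e (prec i)
         | Inr _ \<Rightarrow> prec i \<in> V \<and> tp (prec i) = n - 1 \<and> inc (prec i) z)) \<and>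
     inj_on prec {i. i \<le> m - 1 \<and> ptype n (tp x) i = n - 1}"

end

theory Submission
  imports Defs
begin

text \<open>
  Properties (F), (I), (V) and (H) of \<open>\<Delta>'\<close> hold essentially by construction: a new element
  of type \<open>n - 1\<close> is incident with the same elements of type \<open>\<le> n - 2\<close> as its precursor, and
  only finitely many elements of type \<open>n\<close> are added. For (C) at a new element of type \<open>n\<close>,
  its two neighbours on \<open>\<gamma>\<close> and the attached elements supply exactly one element over each
  precursor; at an old element of type \<open>n\<close> one needs that no new element of type \<open>n - 1\<close> is
  incident with it, which is why the existing vertices \<open>c1, c2\<close> next to an endpoint of type
  \<open>n\<close> must see no other element of type \<open>n\<close>. Such vertices exist because \<open>z\<close> lies on
  infinitely many hyperplanes (the field is infinite), each with a representative on the
  endpoint by (C), whereas each of the finitely many other elements of type \<open>n\<close> carries at most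
  one of these representatives, as the residue of \<open>z\<close> has no digons.

  The heart of the matter is (P). Attached elements have a single neighbour in every residue
  and inner vertices of \<open>\<gamma>\<close> are adjacent only to their neighbours on \<open>\<gamma>\<close>, so a short
  cycle in a residue of \<open>\<Delta>'\<close> either lies in \<open>\<Delta>\<close> or runs through all of \<open>\<gamma>\<close>. In the
  latter case the residue is that of \<open>z\<close>, because two distinct precursors on \<open>\<gamma>\<close> are
  hyperplanes, whose only common element of type \<open>n - 2\<close> is \<open>z\<close>; and the rest of the cycle
  is a path from \<open>y\<close> to \<open>x\<close> of length at most \<open>m\<close> in that residue, contradicting the choice
  of \<open>x\<close> and \<open>y\<close>.
\<close>

section \<open>Linear algebra over a skew field\<close>

lemma lspanI: "v = lincomb d c b \<Longrightarrow> v \<in> lspan d b"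
  unfolding lspan_def by blast

lemma lspanE: "v \<in> lspan d b \<Longrightarrow> (\<And>c. v = lincomb d c b \<Longrightarrow> P) \<Longrightarrow> P"
  unfolding lspan_def by blast

lemma lincomb_Suc: "lincomb (Suc d) c b j = lincomb d c b j + c d * b d j"
  by (simp add: lincomb_def)

lemma lincomb_fun_upd_top: "lincomb d c (b(d := v)) = lincomb d c b"
  unfolding lincomb_def by (rule ext, rule sum.cong) auto

lemma lincomb_cong:
  "(\<And>i. i < d \<Longrightarrow> c i = c' i) \<Longrightarrow> (\<And>i. i < d \<Longrightarrow> b i = b' i) \<Longrightarrow>
   lincomb d c b = lincomb d c' b'"
  unfolding lincomb_def by (rule ext, rule sum.cong) auto

lemma lincomb_lincomb:
  assumes "\<And>i. i < d \<Longrightarrow> b i = lincomb e (a i) c"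
  shows "lincomb d g b = lincomb e (\<lambda>k. \<Sum>i<d. g i * a i k) c"
proof (rule ext)
  fix j
  have "lincomb d g b j = (\<Sum>i<d. \<Sum>k<e. g i * a i k * c k j)"
    using assms by (simp add: lincomb_def sum_distrib_left mult.assoc)
  also have "\<dots> = (\<Sum>k<e. \<Sum>i<d. g i * a i k * c k j)"
    by (rule sum.swap)
  finally show "lincomb d g b j = lincomb e (\<lambda>k. \<Sum>i<d. g i * a i k) c j"
    by (simp add: lincomb_def sum_distrib_right)
qed

lemma lincomb_unit_coeff:
  assumes "i < d"
  shows "lincomb d (\<lambda>i'. if i' = i then 1 else 0) b = b i"
proof (rule ext)
  fix j
  have "lincomb d (\<lambda>i'. if i' = i then 1 else 0) b j = (\<Sum>i'<d. if i' = i then b i j else 0)"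
    unfolding lincomb_def by (rule sum.cong) auto
  then show "lincomb d (\<lambda>i'. if i' = i then 1 else 0) b j = b i j"
    using assms by simp
qed

lemma lincomb_diff:
  "lincomb d (\<lambda>k. a k - s * a' k) c j = lincomb d a c j - s * lincomb d a' c j"
  by (simp add: lincomb_def left_diff_distrib sum_subtractf sum_distrib_left mult.assoc)

lemma in_lspan: "i < d \<Longrightarrow> b i \<in> lspan d b"
  by (rule lspanI[OF lincomb_unit_coeff[symmetric]])

lemma zero_in_lspan: "(\<lambda>_. 0) \<in> lspan d b"
  by (rule lspanI[of _ d "\<lambda>_. 0"]) (simp add: lincomb_def)

lemma lspan_subset_lspan:
  assumes "\<And>i. i < d \<Longrightarrow> b i \<in> lspan e c"
  shows "lspan d b \<subseteq> lspan e c"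
proof
  have "\<forall>i. \<exists>a. i < d \<longrightarrow> b i = lincomb e a c"
    using assms unfolding lspan_def by blast
  then obtain a where a: "\<And>i. i < d \<Longrightarrow> b i = lincomb e (a i) c" by metis
  fix v assume "v \<in> lspan d b"
  then obtain g where "v = lincomb d g b" by (rule lspanE)
  then show "v \<in> lspan e c"
    using lincomb_lincomb[OF a] by (auto intro: lspanI)
qed

lemma lspan_subset_vecs:
  assumes "\<And>i. i < d \<Longrightarrow> b i \<in> vecs n"
  shows "lspan d b \<subseteq> vecs n"
  using assms unfolding lspan_def vecs_def lincomb_def by auto

lemma lin_indep_nonzero: "lin_indep d b \<Longrightarrow> i < d \<Longrightarrow> b i \<noteq> (\<lambda>_. 0)"
  using lincomb_unit_coeff[of i d b] unfolding lin_indep_def by fastforce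

lemma sum_lessThan_skip:
  fixes F :: "nat \<Rightarrow> 'a::comm_monoid_add"
  assumes "i0 < d"
  shows "(\<Sum>i<d. F i) = F i0 + (\<Sum>i<d - 1. F (if i < i0 then i else Suc i))"
  using assms
proof (induction d)
  case (Suc d)
  show ?case
  proof (cases "i0 = d")
    case True
    have "(\<Sum>i<d. F (if i < i0 then i else Suc i)) = (\<Sum>i<d. F i)"
      using True by (intro sum.cong) auto
    then show ?thesis using True by (simp add: add.commute)
  next
    case False
    with Suc.prems obtain d' where d': "d = Suc d'" "i0 \<le> d'" by (cases d) auto
    show ?thesis using Suc.IH False Suc.prems d' by (simp add: add.assoc)
  qed
qed simp

text \<open>Eliminating the last coordinate \<open>c e\<close> by means of the vector \<open>b i0\<close> leaves \<open>d - 1\<close>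
  independent vectors in the span of the first \<open>e\<close> vectors \<open>c\<close>.\<close>

lemma lin_indep_exchange:
  fixes c :: "nat \<Rightarrow> nat \<Rightarrow> 'k::division_ring"
  assumes b: "lin_indep d b" and A: "\<And>i. i < d \<Longrightarrow> b i = lincomb (Suc e) (A i) c"
    and i0: "i0 < d" "A i0 e \<noteq> 0"
  obtains b' where "lin_indep (d - 1) b'" "\<And>i. i < d - 1 \<Longrightarrow> b' i \<in> lspan e c"
proof
  define \<sigma> where "\<sigma> i = (if i < i0 then i else Suc i)" for i
  define t where "t i = A (\<sigma> i) e * inverse (A i0 e)" for i
  define b' where "b' i = (\<lambda>j. b (\<sigma> i) j - t i * b i0 j)" for i
  have \<sigma>_lt: "\<sigma> i < d" if "i < d - 1" for i using that i0 by (auto simp: \<sigma>_def)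
  show "b' i \<in> lspan e c" if "i < d - 1" for i
  proof (rule lspanI, rule ext)
    fix j
    define a where "a k = A (\<sigma> i) k - t i * A i0 k" for k
    have "a e = 0" using i0(2) by (simp add: a_def t_def mult.assoc)
    have "b' i j = lincomb (Suc e) (A (\<sigma> i)) c j - t i * lincomb (Suc e) (A i0) c j"
      using A[OF \<sigma>_lt[OF that]] A[OF i0(1)] by (simp add: b'_def)
    also have "\<dots> = lincomb (Suc e) a c j"
      unfolding a_def by (rule lincomb_diff[symmetric])
    finally show "b' i j = lincomb e a c j" using \<open>a e = 0\<close> by (simp add: lincomb_Suc)
  qed
  show "lin_indep (d - 1) b'"
    unfolding lin_indep_def
  proof (intro allI impI)
    fix g i
    assume g: "lincomb (d - 1) g b' = (\<lambda>_. 0)" and i: "i < d - 1"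
    define G where "G k = (if k = i0 then - (\<Sum>l<d - 1. g l * t l)
                          else if k < i0 then g k else g (k - 1))" for k
    have G\<sigma>: "G (\<sigma> l) = g l" for l by (auto simp: G_def \<sigma>_def)
    have G_i0: "G i0 = - (\<Sum>l<d - 1. g l * t l)" by (simp add: G_def)
    have "lincomb d G b = (\<lambda>_. 0)"
    proof (rule ext)
      fix j
      have "lincomb d G b j = G i0 * b i0 j + (\<Sum>l<d - 1. G (\<sigma> l) * b (\<sigma> l) j)"
        unfolding lincomb_def \<sigma>_def by (rule sum_lessThan_skip[OF i0(1)])
      also have "\<dots> = (\<Sum>l<d - 1. g l * b (\<sigma> l) j) - (\<Sum>l<d - 1. g l * t l) * b i0 j"
        by (simp only: G\<sigma> G_i0 minus_mult_left[symmetric] uminus_add_conv_diff)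
      also have "\<dots> = lincomb (d - 1) g b' j"
        by (simp add: lincomb_def b'_def right_diff_distrib sum_subtractf sum_distrib_right mult.assoc)
      finally show "lincomb d G b j = 0" using g by simp
    qed
    then have "G (\<sigma> i) = 0" using b \<sigma>_lt[OF i] unfolding lin_indep_def by blast
    then show "g i = 0" by (simp add: G\<sigma>)
  qed
qed

lemma lin_indep_le_spanning:
  fixes c :: "nat \<Rightarrow> nat \<Rightarrow> 'k::division_ring"
  assumes "lin_indep d b" "\<And>i. i < d \<Longrightarrow> b i \<in> lspan e c"
  shows "d \<le> e"
  using assms
proof (induction e arbitrary: d b)
  case 0
  have "b 0 = (\<lambda>_. 0)" if "0 < d"
    using "0.prems"(2)[OF that] unfolding lspan_def lincomb_def by auto
  then show ?case using lin_indep_nonzero[OF "0.prems"(1)] by blast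
next
  case (Suc e)
  have "\<forall>i. \<exists>a. i < d \<longrightarrow> b i = lincomb (Suc e) a c"
    using Suc.prems(2) unfolding lspan_def by blast
  then obtain A where A: "\<And>i. i < d \<Longrightarrow> b i = lincomb (Suc e) (A i) c" by metis
  show ?case
  proof (cases "\<forall>i<d. A i e = 0")
    case True
    have "b i \<in> lspan e c" if "i < d" for i
      using A[OF that] True that by (auto simp: lincomb_Suc intro!: lspanI ext)
    then show ?thesis using Suc.IH[OF Suc.prems(1)] by fastforce
  next
    case False
    then obtain i0 where "i0 < d" "A i0 e \<noteq> 0" by blast
    then obtain b' where "lin_indep (d - 1) b'" "\<And>i. i < d - 1 \<Longrightarrow> b' i \<in> lspan e c"
      using lin_indep_exchange[OF Suc.prems(1) A] by blast
    then have "d - 1 \<le> e" by (rule Suc.IH)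
    then show ?thesis by simp
  qed
qed

lemma subspace_dim_unique:
  assumes "subspace_dim n d U" "subspace_dim n d' U"
  shows "d = d'"
proof -
  obtain b where b: "lin_indep d b" "lspan d b = U"
    using assms(1) unfolding subspace_dim_def by blast
  obtain b' where b': "lin_indep d' b'" "lspan d' b' = U"
    using assms(2) unfolding subspace_dim_def by blast
  have "d \<le> d'" using lin_indep_le_spanning[OF b(1), of d' b'] in_lspan[of _ d b] b b' by blast
  moreover have "d' \<le> d" using lin_indep_le_spanning[OF b'(1), of d b] in_lspan[of _ d' b'] b b' by blast
  ultimately show ?thesis by simp
qed

lemma lin_indep_fun_upd_top:
  fixes b :: "nat \<Rightarrow> nat \<Rightarrow> 'k::division_ring"
  assumes li: "lin_indep d b" and v: "v \<notin> lspan d b"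
  shows "lin_indep (Suc d) (b(d := v))"
  unfolding lin_indep_def
proof (intro allI impI)
  fix g i
  assume g: "lincomb (Suc d) g (b(d := v)) = (\<lambda>_. 0)" and i: "i < Suc d"
  have eq: "lincomb d g b j + g d * v j = 0" for j
    using fun_cong[OF g, of j] by (simp add: lincomb_Suc lincomb_fun_upd_top)
  have gd: "g d = 0"
  proof (rule ccontr)
    assume nz: "g d \<noteq> 0"
    have "v = lincomb d (\<lambda>i. - inverse (g d) * g i) b"
    proof (rule ext)
      fix j
      have "g d * v j = - lincomb d g b j"
        using eq[of j] by (simp add: eq_neg_iff_add_eq_0 add.commute)
      then have "v j = - (inverse (g d) * lincomb d g b j)"
        using nz by (metis left_inverse minus_mult_right mult.assoc mult_1)
      then show "v j = lincomb d (\<lambda>i. - inverse (g d) * g i) b j"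
        by (simp add: lincomb_def sum_distrib_left mult.assoc sum_negf)
    qed
    with v show False by (auto intro: lspanI)
  qed
  have "lincomb d g b = (\<lambda>_. 0)" using eq gd by (auto intro: ext)
  then have "\<forall>i<d. g i = 0" using li unfolding lin_indep_def by blast
  with gd i show "g i = 0" by (cases "i = d") auto
qed

lemma lspan_eq_if_lin_indep:
  assumes "lin_indep d B" "\<And>i. i < d \<Longrightarrow> B i \<in> lspan d C"
  shows "lspan d B = lspan d C"
proof
  show "lspan d B \<subseteq> lspan d C" by (rule lspan_subset_lspan) (use assms(2) in auto)
  show "lspan d C \<subseteq> lspan d B"
  proof
    fix w assume w: "w \<in> lspan d C"
    show "w \<in> lspan d B"
    proof (rule ccontr)
      assume "w \<notin> lspan d B"
      then have "lin_indep (Suc d) (B(d := w))" using lin_indep_fun_upd_top assms(1) by blast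
      then have "Suc d \<le> d"
        by (rule lin_indep_le_spanning) (use assms(2) w in \<open>auto simp: less_Suc_eq\<close>)
      then show False by simp
    qed
  qed
qed

definition unit_vec :: "nat \<Rightarrow> nat \<Rightarrow> 'k::division_ring" where
  "unit_vec i = (\<lambda>j. if j = i then 1 else 0)"

lemma lin_indep_unit_vec: "lin_indep d (unit_vec :: nat \<Rightarrow> nat \<Rightarrow> 'k::division_ring)"
  unfolding lin_indep_def
proof (intro allI impI)
  fix c :: "nat \<Rightarrow> 'k" and i assume h: "lincomb d c unit_vec = (\<lambda>_. 0)" and i: "i < d"
  have "lincomb d c unit_vec i = (\<Sum>i'<d. if i' = i then c i else 0)"
    unfolding lincomb_def unit_vec_def by (rule sum.cong) auto
  then show "c i = 0" using h i by simp
qed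

lemma exists_vec_notin_lspan:
  fixes b :: "nat \<Rightarrow> nat \<Rightarrow> 'k::division_ring"
  assumes "lin_indep d b" "d < n"
  obtains u where "u \<in> vecs n" "u \<notin> lspan d b"
proof -
  have "\<not> (\<forall>i<n. (unit_vec i :: nat \<Rightarrow> 'k) \<in> lspan d b)"
    using lin_indep_le_spanning[OF lin_indep_unit_vec] assms(2) by (meson not_le)
  then obtain i where "i < n" "unit_vec i \<notin> lspan d b" by blast
  moreover have "unit_vec i \<in> vecs n" if "i < n" for i
    using that unfolding vecs_def unit_vec_def by simp
  ultimately show ?thesis using that by blast
qed

lemma line_subspace_dim:
  fixes u :: "nat \<Rightarrow> 'k::division_ring"
  assumes "u \<in> vecs n" "u \<noteq> (\<lambda>_. 0)"
  shows "subspace_dim n 1 (lspan 1 (\<lambda>_. u))"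
  unfolding subspace_dim_def
proof (intro conjI exI)
  show "lspan 1 (\<lambda>_. u) \<subseteq> vecs n" using lspan_subset_vecs[of 1 "\<lambda>_. u" n] assms by blast
  show "lin_indep 1 (\<lambda>_. u)"
    unfolding lin_indep_def
  proof (intro allI impI)
    fix c :: "nat \<Rightarrow> 'k" and i
    assume h: "lincomb 1 c (\<lambda>_. u) = (\<lambda>_. 0)" and i: "i < (1::nat)"
    obtain j where j: "u j \<noteq> 0" using assms(2) by auto
    have "c 0 * u j = 0" using fun_cong[OF h, of j] by (simp add: lincomb_def)
    with j i show "c i = 0" by simp
  qed
qed simp

lemma subspace_dim_basis:
  assumes "subspace_dim n d U"
  obtains b where "lin_indep d b" "lspan d b = U" "U \<subseteq> vecs n"
  using assms unfolding subspace_dim_def by blast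

text \<open>\<open>U1\<close> together with any vector of \<open>U2\<close> outside it already spans \<open>P1\<close> and \<open>P2\<close>.\<close>

lemma subspace_eq_if_contains_two:
  fixes U1 :: "(nat \<Rightarrow> 'k::division_ring) set"
  assumes U1: "subspace_dim n d U1" and "U2 \<subseteq> P1" "U2 \<subseteq> P2" "\<not> U2 \<subseteq> U1"
    and P1: "subspace_dim n (Suc d) P1" "U1 \<subseteq> P1"
    and P2: "subspace_dim n (Suc d) P2" "U1 \<subseteq> P2"
  shows "P1 = P2"
proof -
  obtain u where u: "u \<in> U2" "u \<notin> U1" using assms(4) by blast
  obtain b where b: "lin_indep d b" "lspan d b = U1" "U1 \<subseteq> vecs n"
    by (rule subspace_dim_basis[OF U1])
  define B where "B = b(d := u)"
  have B: "lin_indep (Suc d) B" unfolding B_def by (rule lin_indep_fun_upd_top) (use b u in auto)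
  have "lspan (Suc d) B = P" if P: "subspace_dim n (Suc d) P" "U1 \<subseteq> P" "U2 \<subseteq> P" for P
  proof -
    obtain p where p: "lin_indep (Suc d) p" "lspan (Suc d) p = P" "P \<subseteq> vecs n"
      by (rule subspace_dim_basis[OF P(1)])
    have "B i \<in> lspan (Suc d) p" if "i < Suc d" for i
      using that in_lspan[of i d b] b(2) u(1) P(2,3) p(2) by (auto simp: B_def less_Suc_eq)
    then show ?thesis using lspan_eq_if_lin_indep[OF B, of p] p(2) by blast
  qed
  then show ?thesis using P1 P2 assms(2,3) by metis
qed

lemma lin_indep_coeffs_zero:
  fixes bz :: "nat \<Rightarrow> nat \<Rightarrow> 'k::division_ring"
  assumes "lin_indep (Suc (Suc d)) (bz(d := u, Suc d := w))"
    and "\<And>j. lincomb d G bz j + G d * u j + G (Suc d) * w j = 0"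
  shows "G d = 0" "G (Suc d) = 0"
proof -
  have "lincomb d G (bz(d := u, Suc d := w)) = lincomb d G bz"
    by (rule lincomb_cong) auto
  then have "lincomb (Suc (Suc d)) G (bz(d := u, Suc d := w)) = (\<lambda>_. 0)"
    using assms(2) by (auto simp: lincomb_Suc intro: ext)
  then show "G d = 0" "G (Suc d) = 0" using assms(1) unfolding lin_indep_def by simp_all
qed

lemma pencil_lin_indep:
  fixes bz :: "nat \<Rightarrow> nat \<Rightarrow> 'k::division_ring"
  assumes bz: "lin_indep d bz" and uw: "lin_indep (Suc (Suc d)) (bz(d := u, Suc d := w))"
  shows "lin_indep (Suc d) (bz(d := (\<lambda>j. u j + t * w j)))"
proof (rule lin_indep_fun_upd_top[OF bz], rule notI)
  assume "(\<lambda>j. u j + t * w j) \<in> lspan d bz"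
  then obtain g where g: "(\<lambda>j. u j + t * w j) = lincomb d g bz" by (rule lspanE)
  define G where "G i = (if i < d then - g i else if i = d then 1 else t)" for i
  have "lincomb d G bz = lincomb d (\<lambda>i. - g i) bz" by (rule lincomb_cong) (auto simp: G_def)
  then have "lincomb d G bz j + G d * u j + G (Suc d) * w j = 0" for j
    using fun_cong[OF g, of j] by (simp add: G_def lincomb_def sum_negf algebra_simps)
  then have "G d = 0" by (rule lin_indep_coeffs_zero(1)[OF uw])
  then show False by (simp add: G_def)
qed

lemma pencil_inj:
  fixes bz :: "nat \<Rightarrow> nat \<Rightarrow> 'k::division_ring"
  assumes uw: "lin_indep (Suc (Suc d)) (bz(d := u, Suc d := w))"
  shows "inj (\<lambda>t. lspan (Suc d) (bz(d := (\<lambda>j. u j + t * w j))))"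
proof (rule injI)
  fix t t' :: 'k
  let ?F = "\<lambda>t. bz(d := (\<lambda>j. u j + t * w j))"
  assume "lspan (Suc d) (?F t) = lspan (Suc d) (?F t')"
  moreover have "(\<lambda>j. u j + t' * w j) \<in> lspan (Suc d) (?F t')"
    using in_lspan[of d "Suc d" "?F t'"] by simp
  ultimately obtain g where g: "(\<lambda>j. u j + t' * w j) = lincomb (Suc d) g (?F t)"
    by (auto elim: lspanE)
  define G where "G i = (if i < d then g i else if i = d then g d - 1 else g d * t - t')" for i
  have "lincomb d G bz = lincomb d g bz" by (rule lincomb_cong) (auto simp: G_def)
  then have "lincomb d G bz j + G d * u j + G (Suc d) * w j = 0" for j
    using fun_cong[OF g, of j] by (simp add: G_def lincomb_Suc lincomb_fun_upd_top algebra_simps)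
  then have "G d = 0" "G (Suc d) = 0" by (rule lin_indep_coeffs_zero[OF uw])+
  then have "g d - 1 = 0" "g d * t - t' = 0" by (simp_all add: G_def)
  then show "t = t'" by simp
qed

lemma pencil_of_subspaces:
  fixes bz :: "nat \<Rightarrow> nat \<Rightarrow> 'k::division_ring"
  assumes bz: "lin_indep d bz" "lspan d bz \<subseteq> vecs n" and dn: "Suc (Suc d) \<le> n"
  obtains H :: "'k \<Rightarrow> (nat \<Rightarrow> 'k) set"
  where "inj H" "\<And>t. subspace_dim n (Suc d) (H t)" "\<And>t. lspan d bz \<subseteq> H t"
proof -
  obtain u where u: "u \<in> vecs n" "u \<notin> lspan d bz"
    using exists_vec_notin_lspan[OF bz(1), of n] dn by force
  have liu: "lin_indep (Suc d) (bz(d := u))" by (rule lin_indep_fun_upd_top[OF bz(1) u(2)])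
  obtain w where w: "w \<in> vecs n" "w \<notin> lspan (Suc d) (bz(d := u))"
    using exists_vec_notin_lspan[OF liu, of n] dn by force
  have uw: "lin_indep (Suc (Suc d)) (bz(d := u, Suc d := w))"
    by (rule lin_indep_fun_upd_top[OF liu w(2)])
  define F where "F t = bz(d := (\<lambda>j. u j + t * w j))" for t
  have "F t i \<in> vecs n" if "i < Suc d" for t i
    using in_lspan[of i d bz] bz(2) u(1) w(1) that by (auto simp: F_def less_Suc_eq vecs_def)
  then have "subspace_dim n (Suc d) (lspan (Suc d) (F t))" for t
    unfolding subspace_dim_def F_def using pencil_lin_indep[OF bz(1) uw] lspan_subset_vecs
    by (metis F_def)
  moreover have "lspan d bz \<subseteq> lspan (Suc d) (F t)" for t
  proof (rule lspan_subset_lspan)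
    fix i assume "i < d"
    then show "bz i \<in> lspan (Suc d) (F t)" using in_lspan[of i "Suc d" "F t"] by (simp add: F_def)
  qed
  ultimately show ?thesis using that pencil_inj[OF uw] unfolding F_def by blast
qed

section \<open>Residues\<close>

lemma int_mod_eq_imp_dist_ge:
  fixes a b L :: int
  assumes "a mod L = b mod L" "a < b"
  shows "L \<le> b - a"
proof -
  have "L dvd b - a" using assms(1) mod_eq_dvd_iff[of b L a] by simp
  then show ?thesis using zdvd_imp_le assms(2) by simp
qed

lemma res_adj_sym:
  "geometry I W tp inc \<Longrightarrow> res_adj n W tp inc z a b \<Longrightarrow> res_adj n W tp inc z b a"
  unfolding res_adj_def res_vertices_def geometry_def by auto

lemma res_walk_0: "a \<in> res_vertices n W tp inc z \<Longrightarrow> res_walk n W tp inc z 0 a a"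
  unfolding res_walk_def by (rule exI[of _ "\<lambda>_. a"]) simp

lemma res_walk_1: "res_adj n W tp inc z a b \<Longrightarrow> res_walk n W tp inc z 1 a b"
  unfolding res_walk_def
  by (rule exI[of _ "\<lambda>i. if i = 0 then a else b"]) (auto simp: res_adj_def le_Suc_eq)

lemma res_walk_rev:
  assumes "geometry I W tp inc" "res_walk n W tp inc z L a b"
  shows "res_walk n W tp inc z L b a"
proof -
  obtain p where p: "p 0 = a" "p L = b" "\<forall>i\<le>L. p i \<in> res_vertices n W tp inc z"
    "\<forall>i<L. res_adj n W tp inc z (p i) (p (Suc i))"
    using assms(2) unfolding res_walk_def by blast
  have "res_adj n W tp inc z (p (L - i)) (p (L - Suc i))" if "i < L" for i
  proof -
    have "res_adj n W tp inc z (p (L - Suc i)) (p (Suc (L - Suc i)))" using p(4) that by simp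
    moreover have "Suc (L - Suc i) = L - i" using that by simp
    ultimately show ?thesis using res_adj_sym[OF assms(1)] by simp
  qed
  then show ?thesis unfolding res_walk_def
    by (intro exI[of _ "\<lambda>i. p (L - i)"]) (use p in auto)
qed

section \<open>The geometry \<open>\<Delta>\<close>\<close>

locale subspace_geometry =
  fixes n m :: nat
    and W V :: "'e set" and tp :: "'e \<Rightarrow> nat" and inc :: "'e \<Rightarrow> 'e \<Rightarrow> bool"
    and sp :: "'e \<Rightarrow> (nat \<Rightarrow> 'k::division_ring) set"
  assumes n3: "3 \<le> n" and m4: "4 \<le> m"
    and K_inf: "infinite (UNIV :: 'k set)"
    and geom: "geometry {1..n} W tp inc"
    and VW: "V \<subseteq> W"
    and sp_bij: "bij_betw sp V {U. \<exists>d. 1 \<le> d \<and> d \<le> n - 1 \<and> subspace_dim n d U}"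
    and sp_tp: "\<forall>v\<in>V. subspace_dim n (tp v) (sp v)"
    and sp_inc: "\<forall>v\<in>V. \<forall>w\<in>V. inc v w \<longleftrightarrow> (sp v \<subseteq> sp w \<or> sp w \<subseteq> sp v)"
    and props: "all_props n m V W tp inc"
begin

lemma n_minus_1_ne_n: "n - 1 \<noteq> n" and n_minus_2_less: "n - 2 < n - 1"
  using n3 by simp_all

lemma tp_range: "a \<in> W \<Longrightarrow> 1 \<le> tp a \<and> tp a \<le> n"
  using geom unfolding geometry_def by auto

lemma inc_sym: "a \<in> W \<Longrightarrow> b \<in> W \<Longrightarrow> inc a b = inc b a"
  using geom unfolding geometry_def by auto

lemma inc_same_tp: "a \<in> W \<Longrightarrow> b \<in> W \<Longrightarrow> tp a = tp b \<Longrightarrow> inc a b \<longleftrightarrow> a = b"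
  using geom unfolding geometry_def by auto

lemma Delta_F: "prop_F n W tp inc" and Delta_I: "prop_I n W tp" and Delta_V: "prop_V n V W tp"
  and Delta_P: "prop_P n m W tp inc" and Delta_H: "prop_H n V W tp inc"
  and Delta_C: "prop_C n V W tp inc"
  using props unfolding all_props_def by blast+

lemma in_V_if_low:
  assumes "w \<in> W" "tp w \<le> n - 2"
  shows "w \<in> V"
proof (rule ccontr)
  assume "w \<notin> V"
  then have "tp w = n - 1 \<or> tp w = n" using Delta_V assms(1) unfolding prop_V_def by blast
  then show False using assms(2) n3 by linarith
qed

lemma inc_top: "a \<in> W \<Longrightarrow> b \<in> W \<Longrightarrow> tp a \<le> n - 2 \<Longrightarrow> tp b = n \<Longrightarrow> inc b a"
  using Delta_F inc_sym unfolding prop_F_def by metis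

lemma sp_basis:
  assumes "v \<in> V"
  obtains b where "lin_indep (tp v) b" "lspan (tp v) b = sp v" "sp v \<subseteq> vecs n"
  using sp_tp assms subspace_dim_basis by blast

lemma sp_inj: "v \<in> V \<Longrightarrow> w \<in> V \<Longrightarrow> sp v = sp w \<Longrightarrow> v = w"
  using sp_bij unfolding bij_betw_def inj_on_def by blast

lemma sp_surj:
  assumes "subspace_dim n d U" "1 \<le> d" "d \<le> n - 1"
  obtains v where "v \<in> V" "sp v = U" "tp v = d"
proof -
  have "U \<in> sp ` V" using assms sp_bij by (auto simp: bij_betw_def)
  then obtain v where v: "v \<in> V" "sp v = U" by blast
  then have "tp v = d" using subspace_dim_unique assms(1) sp_tp by metis
  with v that show ?thesis by blast
qed

lemma inc_V_iff: "v \<in> V \<Longrightarrow> w \<in> V \<Longrightarrow> inc v w \<longleftrightarrow> sp v \<subseteq> sp w \<or> sp w \<subseteq> sp v"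
  using sp_inc by blast

lemma tp_le_if_sp_subset:
  assumes "v \<in> V" "w \<in> V" "sp v \<subseteq> sp w"
  shows "tp v \<le> tp w"
proof -
  obtain b where b: "lin_indep (tp v) b" "lspan (tp v) b = sp v" by (rule sp_basis[OF assms(1)])
  obtain b' where b': "lspan (tp w) b' = sp w" by (rule sp_basis[OF assms(2)])
  show ?thesis
  proof (rule lin_indep_le_spanning[OF b(1)])
    fix i assume "i < tp v"
    then have "b i \<in> sp w" using in_lspan[of i "tp v" b] b(2) assms(3) by blast
    then show "b i \<in> lspan (tp w) b'" using b' by simp
  qed
qed

lemma sp_subset_if_inc:
  assumes "v \<in> V" "w \<in> V" "tp v < tp w" "inc v w"
  shows "sp v \<subseteq> sp w"
proof (rule ccontr)
  assume "\<not> sp v \<subseteq> sp w"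
  then have "sp w \<subseteq> sp v" using assms(1,2,4) inc_V_iff by blast
  then show False using tp_le_if_sp_subset[OF assms(2,1)] assms(3) by simp
qed

lemma sp_not_subset_if_same_tp:
  assumes "v \<in> V" "w \<in> V" "tp v = tp w" "v \<noteq> w"
  shows "\<not> sp v \<subseteq> sp w"
proof -
  have "\<not> inc v w" using inc_same_tp assms VW by blast
  then show ?thesis using inc_V_iff[OF assms(1,2)] by blast
qed

lemma precursor_unique:
  assumes b: "b \<in> V" "tp b = n - 1" and b': "b' \<in> V" "tp b' = n - 1"
    and same: "\<forall>e\<in>W. 1 \<le> tp e \<and> tp e \<le> n - 2 \<longrightarrow> (inc b e \<longleftrightarrow> inc b' e)"
  shows "b = b'"
proof (rule ccontr)
  assume "b \<noteq> b'"
  then have "\<not> sp b \<subseteq> sp b'" using sp_not_subset_if_same_tp b b' by simp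
  then obtain u where u: "u \<in> sp b" "u \<notin> sp b'" by blast
  obtain bb' where "lspan (tp b') bb' = sp b'" by (rule sp_basis[OF b'(1)])
  then have "u \<noteq> (\<lambda>_. 0)" using u(2) zero_in_lspan by metis
  moreover have "u \<in> vecs n" using u(1) sp_basis[OF b(1)] by blast
  moreover have "(1::nat) \<le> n - 1" using n3 by simp
  ultimately obtain e where e: "e \<in> V" "sp e = lspan 1 (\<lambda>_. u)" "tp e = 1"
    using sp_surj[OF line_subspace_dim] by blast
  have "u \<in> sp e" using e(2) in_lspan[of 0 1 "\<lambda>_. u"] by simp
  obtain bb where "lspan (tp b) bb = sp b" by (rule sp_basis[OF b(1)])
  then have "sp e \<subseteq> sp b"
    unfolding e(2) using lspan_subset_lspan[of 1 "\<lambda>_. u" "tp b" bb] u(1) by simp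
  then have "inc b e" using inc_V_iff[OF b(1) e(1)] by blast
  moreover have "e \<in> W" "1 \<le> tp e \<and> tp e \<le> n - 2" using e VW n3 by auto
  ultimately have "inc b' e" using same by blast
  moreover have "\<not> sp b' \<subseteq> sp e" using tp_le_if_sp_subset[OF b'(1) e(1)] b'(2) e(3) n3 by auto
  ultimately show False using inc_V_iff[OF b'(1) e(1)] u(2) \<open>u \<in> sp e\<close> by blast
qed

lemma common_codim2_unique:
  assumes p1: "p1 \<in> V" "tp p1 = n - 1" and p2: "p2 \<in> V" "tp p2 = n - 1" and "p1 \<noteq> p2"
    and z1: "z1 \<in> V" "tp z1 = n - 2" and z2: "z2 \<in> V" "tp z2 = n - 2"
    and "inc p1 z1" "inc p1 z2" "inc p2 z1" "inc p2 z2"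
  shows "z1 = z2"
proof (rule ccontr)
  assume "z1 \<noteq> z2"
  then have "\<not> sp z2 \<subseteq> sp z1" using sp_not_subset_if_same_tp z1 z2 by simp
  moreover have "sp z \<subseteq> sp p" if "z \<in> V" "tp z = n - 2" "p \<in> V" "tp p = n - 1" "inc p z" for z p
  proof (rule sp_subset_if_inc)
    show "z \<in> V" "p \<in> V" "tp z < tp p" using that n3 by auto
    show "inc z p" using that inc_sym VW by blast
  qed
  moreover have "Suc (n - 2) = n - 1" using n3 by simp
  moreover have "subspace_dim n (tp v) (sp v)" if "v \<in> V" for v using sp_tp that by blast
  ultimately have "sp p1 = sp p2"
    using subspace_eq_if_contains_two[of n "n - 2" "sp z1" "sp z2" "sp p1" "sp p2"] assms
    by metis
  then show False using sp_inj assms by blast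
qed

lemma infinite_hyperplanes_through:
  assumes z: "z \<in> V" "tp z = n - 2"
  shows "infinite {h \<in> V. tp h = n - 1 \<and> inc h z}"
proof -
  obtain bz where bz: "lin_indep (n - 2) bz" "lspan (n - 2) bz = sp z" "sp z \<subseteq> vecs n"
    using sp_basis[OF z(1)] z(2) by metis
  have n2: "Suc (Suc (n - 2)) \<le> n" "Suc (n - 2) = n - 1" using n3 by auto
  obtain H :: "'k \<Rightarrow> _" where H: "inj H" "\<And>t. subspace_dim n (n - 1) (H t)" "\<And>t. sp z \<subseteq> H t"
    using pencil_of_subspaces[OF bz(1) _ n2(1)] bz n2(2) by metis
  have "1 \<le> n - 1" using n3 by simp
  then have "\<forall>t. \<exists>h. h \<in> V \<and> sp h = H t \<and> tp h = n - 1"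
    using sp_surj[OF H(2)] by blast
  then obtain h where h: "\<And>t. h t \<in> V" "\<And>t. sp (h t) = H t" "\<And>t. tp (h t) = n - 1" by metis
  have "inj h" using H(1) h(2) by (metis injD injI)
  moreover have "range h \<subseteq> {h \<in> V. tp h = n - 1 \<and> inc h z}"
    using h H(3) inc_V_iff z(1) by auto
  ultimately show ?thesis using K_inf finite_imageD finite_subset by blast
qed

lemma no_digon_in_residue:
  assumes z: "z \<in> W" "tp z = n - 2"
    and c: "c \<in> W" "tp c = n - 1" "inc c z" and c': "c' \<in> W" "tp c' = n - 1" "inc c' z" "c \<noteq> c'"
    and a: "a \<in> W" "tp a = n" and w: "w \<in> W" "tp w = n" "a \<noteq> w"
    and inc: "inc c a" "inc c' a" "inc c w" "inc c' w"
  shows False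
proof -
  define p where "p i = [c, a, c', w] ! i" for i
  have "inc a z" "inc w z" using inc_top[OF z(1)] z(2) a w by auto
  then have "c \<in> R" "c' \<in> R" "a \<in> R" "w \<in> R" if "R = res_vertices n W tp inc z" for R
    using that c c' a w by (auto simp: res_vertices_def)
  then have "res_adj n W tp inc z c a" "res_adj n W tp inc z a c'"
    "res_adj n W tp inc z c' w" "res_adj n W tp inc z w c"
    using inc inc_sym[OF a(1) c'(1)] inc_sym[OF w(1) c(1)] c c' a w n_minus_1_ne_n
    by (simp_all add: res_adj_def)
  then have "res_adj n W tp inc z (p i) (p (Suc i mod 4))" if "i < 4" for i
  proof -
    have "i = 0 \<or> i = 1 \<or> i = 2 \<or> i = 3" using that by auto
    then show ?thesis using \<open>res_adj n W tp inc z c a\<close> \<open>res_adj n W tp inc z a c'\<close>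
        \<open>res_adj n W tp inc z c' w\<close> \<open>res_adj n W tp inc z w c\<close>
      by (elim disjE) (simp_all add: p_def)
  qed
  moreover have "distinct [c, a, c', w]" using c c' a w n_minus_1_ne_n by auto
  then have "inj_on p {..<4}" by (simp add: inj_on_def p_def nth_eq_iff_index_eq)
  ultimately have "res_cycle n W tp inc z (2 * 2)" unfolding res_cycle_def by auto
  moreover have "(2::nat) < m" using m4 by simp
  ultimately show False using Delta_P z unfolding prop_P_def by blast
qed

lemma infinite_hyperplanes_on_top:
  assumes z: "z \<in> W" "tp z = n - 2" and a: "a \<in> W" "tp a = n"
  shows "infinite {c \<in> W. tp c = n - 1 \<and> inc c z \<and> inc c a}"
proof -
  define S where "S = {h \<in> V. tp h = n - 1 \<and> inc h z}"
  have "\<forall>h\<in>S. \<exists>w. w \<in> W \<and> tp w = n - 1 \<and> is_precursor n V W tp inc w h \<and> inc w a"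
    using Delta_C a unfolding prop_C_def S_def by blast
  then obtain f where f: "\<And>h. h \<in> S \<Longrightarrow> f h \<in> W \<and> tp (f h) = n - 1 \<and>
      is_precursor n V W tp inc (f h) h \<and> inc (f h) a"
    by metis
  have "inc (f h) z" if "h \<in> S" for h
    using f[OF that] that z n3 unfolding S_def is_precursor_def by auto
  then have "f ` S \<subseteq> {c \<in> W. tp c = n - 1 \<and> inc c z \<and> inc c a}" using f by blast
  moreover have "inj_on f S"
  proof (rule inj_onI)
    fix h h' assume "h \<in> S" "h' \<in> S" "f h = f h'"
    then show "h = h'"
      using f[of h] f[of h'] precursor_unique[of h h'] by (auto simp: S_def is_precursor_def)
  qed
  then have "infinite (f ` S)"
    using infinite_hyperplanes_through[OF in_V_if_low] z finite_imageD unfolding S_def by auto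
  ultimately show ?thesis using finite_subset by blast
qed

text \<open>By \<open>no_digon_in_residue\<close> each element of type \<open>n\<close> other than \<open>a\<close> meets at most one
  of these hyperplanes, and there are only finitely many such elements.\<close>

lemma finite_hyperplanes_on_two_tops:
  assumes z: "z \<in> W" "tp z = n - 2" and a: "a \<in> W" "tp a = n"
  shows "finite {c \<in> W. tp c = n - 1 \<and> inc c z \<and> inc c a \<and> (\<exists>w\<in>W. tp w = n \<and> w \<noteq> a \<and> inc c w)}"
    (is "finite ?Bad")
proof -
  define T where "T = {w\<in>W. tp w = n} - {a}"
  have "\<forall>c\<in>?Bad. \<exists>w. w \<in> T \<and> inc c w" unfolding T_def by blast
  then have "\<exists>g. \<forall>c\<in>?Bad. g c \<in> T \<and> inc c (g c)" by (rule bchoice)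
  then obtain g where g: "\<And>c. c \<in> ?Bad \<Longrightarrow> g c \<in> T \<and> inc c (g c)" by blast
  have "inj_on g ?Bad"
  proof (rule inj_onI, rule ccontr)
    fix c c' assume c: "c \<in> ?Bad" and c': "c' \<in> ?Bad" and "g c = g c'" and "c \<noteq> c'"
    moreover have "g c \<in> W" "tp (g c) = n" "a \<noteq> g c" "inc c (g c)" "inc c' (g c)"
      using g[OF c] g[OF c'] \<open>g c = g c'\<close> unfolding T_def by auto
    ultimately show False using no_digon_in_residue[OF z, of c c' a "g c"] a by simp
  qed
  moreover have "finite T" using Delta_I unfolding prop_I_def T_def by simp
  ultimately show ?thesis using g inj_on_finite[of g ?Bad T] by blast
qed

lemma exists_end_ok:
  assumes z: "z \<in> W" "tp z = n - 2" and a: "a \<in> W" "tp a = n"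
  shows "\<exists>c. end_ok n W tp inc z a c"
proof -
  let ?A = "{c \<in> W. tp c = n - 1 \<and> inc c z \<and> inc c a}"
  let ?Bad = "{c \<in> W. tp c = n - 1 \<and> inc c z \<and> inc c a \<and> (\<exists>w\<in>W. tp w = n \<and> w \<noteq> a \<and> inc c w)}"
  have "infinite (?A - ?Bad)"
    using Diff_infinite_finite[OF finite_hyperplanes_on_two_tops infinite_hyperplanes_on_top] z a
    by blast
  then have "?A - ?Bad \<noteq> {}" by (metis finite.emptyI)
  then obtain c where "c \<in> ?A" "c \<notin> ?Bad" by blast
  then have "end_ok n W tp inc z a c" unfolding end_ok_def by auto
  then show ?thesis ..
qed

end

locale far_pair = subspace_geometry +
  fixes x y z :: 'e
  assumes z: "z \<in> W" "tp z = n - 2"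
    and x: "x \<in> W" "tp x = n - 1 \<or> tp x = n" "inc x z"
    and y: "y \<in> W" "tp y = n - 1 \<or> tp y = n" "inc y z"
    and parity: "odd m \<longrightarrow> tp x = tp y" "even m \<longrightarrow> tp x \<noteq> tp y"
    and far: "\<forall>L\<le>m. \<not> res_walk n W tp inc z L x y"
begin

lemma z_in_V: "z \<in> V" using in_V_if_low z by simp

lemma x_ne_y: "x \<noteq> y"
  using far res_walk_0[of x n W tp inc z] x by (auto simp: res_vertices_def)

lemma not_res_adj_x_y: "\<not> res_adj n W tp inc z x y"
  using far res_walk_1 m4 by fastforce

end

section \<open>The extension \<open>\<Delta>'\<close>\<close>

locale extension = far_pair +
  fixes c1 c2 :: 'e and prec :: "nat \<Rightarrow> 'e"
  assumes end_x: "tp x = n \<longrightarrow> end_ok n W tp inc z x c1"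
    and end_y: "tp y = n \<longrightarrow> end_ok n W tp inc z y c2"
    and prec_ok: "prec_ok n m V W tp inc z x y c1 c2 prec"
begin

abbreviation "W' \<equiv> ext_W n m V W tp x y prec"
abbreviation "tp' \<equiv> ext_tp n tp x"
abbreviation "inc' \<equiv> ext_inc n m tp inc x y c1 c2 prec"
abbreviation "ninc \<equiv> new_inc n m tp inc x y c1 c2 prec"
abbreviation "\<gamma> \<equiv> pv n m tp x y c1 c2"
abbreviation "pt \<equiv> ptype n (tp x)"
abbreviation "new \<equiv> is_new n m (tp x) (tp y)"
abbreviation "V' \<equiv> Inl ` V :: ('e + 'e newel) set"

lemma c1_ok:
  assumes "tp x = n"
  shows "c1 \<in> W" "tp c1 = n - 1" "inc c1 x" "inc c1 z"
    "\<And>w. w \<in> W \<Longrightarrow> tp w = n \<Longrightarrow> inc c1 w \<Longrightarrow> w = x"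
  using end_x assms unfolding end_ok_def by auto

lemma c2_ok:
  assumes "tp y = n"
  shows "c2 \<in> W" "tp c2 = n - 1" "inc c2 y" "inc c2 z"
    "\<And>w. w \<in> W \<Longrightarrow> tp w = n \<Longrightarrow> inc c2 w \<Longrightarrow> w = y"
  using end_y assms unfolding end_ok_def by auto

lemma c1_ne_y: "tp x = n \<Longrightarrow> c1 \<noteq> y"
proof
  assume tx: "tp x = n" and "c1 = y"
  then have "res_adj n W tp inc z x y"
    using c1_ok(1-4)[OF tx] x y n_minus_1_ne_n inc_sym[OF x(1) y(1)]
    unfolding res_adj_def res_vertices_def by auto
  then show False using not_res_adj_x_y by simp
qed

lemma c2_ne_x: "tp y = n \<Longrightarrow> c2 \<noteq> x"
proof
  assume ty: "tp y = n" and "c2 = x"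
  then have "res_adj n W tp inc z x y"
    using c2_ok(1-4)[OF ty] x y n_minus_1_ne_n unfolding res_adj_def res_vertices_def by auto
  then show False using not_res_adj_x_y by simp
qed

lemma c1_ne_c2: "tp x = n \<Longrightarrow> tp y = n \<Longrightarrow> c1 \<noteq> c2"
  using c1_ok(5) c2_ok(3) y x_ne_y by metis

subsection \<open>The path \<open>\<gamma>\<close>\<close>

lemma pt_cases: "pt i = n \<or> pt i = n - 1" by (simp add: ptype_def)
lemma pt_ge: "n - 1 \<le> pt i" by (simp add: ptype_def)
lemma pt_Suc: "pt (Suc i) = (if pt i = n then n - 1 else n)"
  using n_minus_1_ne_n by (auto simp: ptype_def)
lemma pt_Suc_ne: "pt (Suc i) \<noteq> pt i" using pt_Suc n_minus_1_ne_n by (auto simp: ptype_def)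
lemma pt_0: "pt 0 = tp x" using x(2) by (auto simp: ptype_def)

lemma pt_last: "pt (m - 1) = tp y"
proof -
  have "even (m - 1) \<longleftrightarrow> odd m" using m4 by simp
  then show ?thesis using parity x(2) y(2) n_minus_1_ne_n by (auto simp: ptype_def)
qed

lemma m_arith: "m - 1 \<noteq> 1" "m - 2 \<noteq> 1" "m - 2 \<noteq> m - 1" "m - 2 \<noteq> 0" "m - 1 \<noteq> 0"
   "Suc (m - 2) = m - 1" "(1::nat) \<le> m - 2"
  using m4 by auto

lemma \<gamma>_0: "\<gamma> 0 = Inl x" by (simp add: pv_def)
lemma \<gamma>_last: "\<gamma> (m - 1) = Inl y" using m4 by (simp add: pv_def)
lemma \<gamma>_1: "tp x = n \<Longrightarrow> \<gamma> 1 = Inl c1" using m_arith by (simp add: pv_def)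
lemma \<gamma>_m2: "tp y = n \<Longrightarrow> \<gamma> (m - 2) = Inl c2" using m_arith by (simp add: pv_def)

lemma \<gamma>_Inl_cases: "\<gamma> i = Inl a \<Longrightarrow> (i = 0 \<and> a = x) \<or> (i = m - 1 \<and> a = y) \<or>
   (i = 1 \<and> tp x = n \<and> a = c1) \<or> (i = m - 2 \<and> tp y = n \<and> a = c2)"
  by (auto simp: pv_def split: if_splits)

lemma \<gamma>_Inr: "\<gamma> i = Inr u \<Longrightarrow> u = PathV i"
  by (auto simp: pv_def split: if_splits)

lemma \<gamma>_ne_Att[simp]: "\<gamma> i \<noteq> Inr (Att j a)"
  using \<gamma>_Inr by fastforce

lemma Att_ne_\<gamma>[simp]: "Inr (Att j a) \<noteq> \<gamma> i"
  using \<gamma>_ne_Att by metis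

lemma new_bounds: "new i \<Longrightarrow> 1 \<le> i \<and> i \<le> m - 2" by (simp add: is_new_def)

lemma \<gamma>_eq_PathV_iff: "i \<le> m - 1 \<Longrightarrow> \<gamma> i = Inr (PathV i) \<longleftrightarrow> new i"
  using m4 by (auto simp: pv_def is_new_def)

lemma \<gamma>_new: "new i \<Longrightarrow> \<gamma> i = Inr (PathV i)"
  using \<gamma>_eq_PathV_iff new_bounds by fastforce

lemma \<gamma>_Inl_in_W: "\<gamma> i = Inl a \<Longrightarrow> a \<in> W"
  using \<gamma>_Inl_cases x y c1_ok c2_ok by blast

lemma \<gamma>_Inl_inc_z: "\<gamma> i = Inl a \<Longrightarrow> inc a z"
  using \<gamma>_Inl_cases x y c1_ok c2_ok by blast

lemma \<gamma>_Inl_tp: assumes "i \<le> m - 1" "\<gamma> i = Inl a" shows "tp a = pt i"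
proof -
  have "pt (m - 2) \<noteq> pt (m - 1)" using pt_Suc_ne[of "m - 2"] m_arith(6) by simp
  then show ?thesis
    using \<gamma>_Inl_cases[OF assms(2)] pt_0 pt_last c1_ok c2_ok pt_cases[of "m - 2"] pt_cases[of 1]
      n_minus_1_ne_n
    by (auto simp: ptype_def)
qed

lemma \<gamma>_inj:
  assumes "i \<le> m - 1" "j \<le> m - 1" "\<gamma> i = \<gamma> j"
  shows "i = j"
proof (cases "\<gamma> i")
  case (Inl a)
  then have "\<gamma> j = Inl a" using assms by simp
  moreover have "tp x = n \<Longrightarrow> c1 \<noteq> x" "tp y = n \<Longrightarrow> c2 \<noteq> y"
    using c1_ok c2_ok n_minus_1_ne_n by fastforce+
  ultimately show ?thesis
    using \<gamma>_Inl_cases[OF Inl] \<gamma>_Inl_cases[of j a] x_ne_y c1_ne_c2 c1_ne_y c2_ne_x m_arith by metis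
next
  case (Inr u)
  then show ?thesis using \<gamma>_Inr assms by (metis newel.inject(1))
qed

subsection \<open>Elements, types and incidence of \<open>\<Delta>'\<close>\<close>

lemma W'_cases:
  assumes "u \<in> W'"
  obtains (old) a where "u = Inl a" "a \<in> W"
  | (path) i where "u = Inr (PathV i)" "new i"
  | (att) i a where "u = Inr (Att i a)" "new i" "pt i = n" "a \<in> V" "tp a = n - 1"
       "a \<noteq> prec (i - 1)" "a \<noteq> prec (Suc i)"
  using assms unfolding ext_W_def by blast

lemma Inl_in_W'[simp]: "Inl a \<in> W' \<longleftrightarrow> a \<in> W" unfolding ext_W_def by auto
lemma PathV_in_W'[simp]: "Inr (PathV i) \<in> W' \<longleftrightarrow> new i" unfolding ext_W_def by auto
lemma Att_in_W': "Inr (Att i a) \<in> W' \<longleftrightarrow> new i \<and> pt i = n \<and> a \<in> V \<and> tp a = n - 1 \<and>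
   a \<noteq> prec (i - 1) \<and> a \<noteq> prec (Suc i)" unfolding ext_W_def by auto

lemma tp'_simps[simp]: "tp' (Inl a) = tp a" "tp' (Inr (PathV i)) = pt i" "tp' (Inr (Att i a)) = n - 1"
  by (simp_all add: ext_tp_def)

lemma \<gamma>_in_W': "i \<le> m - 1 \<Longrightarrow> \<gamma> i \<in> W'"
proof (cases "\<gamma> i")
  case (Inr u)
  moreover assume "i \<le> m - 1"
  ultimately show ?thesis using \<gamma>_Inr \<gamma>_eq_PathV_iff by fastforce
qed (simp add: \<gamma>_Inl_in_W)

lemma tp'_\<gamma>: "i \<le> m - 1 \<Longrightarrow> tp' (\<gamma> i) = pt i"
proof (cases "\<gamma> i")
  case (Inr u)
  then show ?thesis using \<gamma>_Inr by fastforce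
qed (simp add: \<gamma>_Inl_tp)

lemma inc'_Inl[simp]: "inc' (Inl a) (Inl b) = inc a b" by (simp add: ext_inc_def)

lemma inc'_new: "\<not> (\<exists>a b. u = Inl a \<and> v = Inl b) \<Longrightarrow> inc' u v = (u = v \<or> ninc u v \<or> ninc v u)"
  by (cases u; cases v) (auto simp: ext_inc_def)

lemma ninc_iff: "ninc u v \<longleftrightarrow>
     (\<exists>i. Suc i \<le> m - 1 \<and> u = \<gamma> i \<and> v = \<gamma> (Suc i)) \<or>
     (\<exists>i e. u = Inr (PathV i) \<and> v = Inl e \<and> tp e \<le> n - 2 \<and> (pt i = n \<or> inc e (prec i))) \<or>
     (\<exists>i a. u = Inr (Att i a) \<and> (v = Inr (PathV i) \<or> (\<exists>e. v = Inl e \<and> tp e \<le> n - 2 \<and> inc e a)))"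
  by (simp add: new_inc_def)

lemma tp'_range: "u \<in> W' \<Longrightarrow> 1 \<le> tp' u \<and> tp' u \<le> n"
  by (cases rule: W'_cases) (use n3 tp_range in \<open>auto simp: ptype_def\<close>)

lemma tp'_Inr: "u \<in> W' \<Longrightarrow> u = Inr w \<Longrightarrow> n - 1 \<le> tp' u"
  by (cases rule: W'_cases) (use pt_ge in auto)

lemma old_if_low: assumes "u \<in> W'" "tp' u \<le> n - 2" obtains a where "u = Inl a" "a \<in> W"
  using assms tp'_Inr n_minus_2_less by (cases u) fastforce+

lemma \<gamma>_not_low:
  assumes "k \<le> m - 1" "\<gamma> k = Inl e"
  shows "\<not> tp e \<le> n - 2"
  using \<gamma>_Inl_tp[OF assms] pt_ge[of k] n_minus_2_less by simp

lemma inc'_PathV_low: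
  assumes "tp e \<le> n - 2"
  shows "inc' (Inr (PathV i)) (Inl e) \<longleftrightarrow> pt i = n \<or> inc e (prec i)"
proof -
  have "\<not> (Suc k \<le> m - 1 \<and> Inl e = \<gamma> k)" "\<not> (Suc k \<le> m - 1 \<and> Inl e = \<gamma> (Suc k))" for k
    using \<gamma>_not_low assms by (metis Suc_leD)+
  then show ?thesis using assms inc'_new[of "Inr (PathV i)" "Inl e"] by (auto simp: ninc_iff)
qed

lemma inc'_Att_low:
  assumes "tp e \<le> n - 2"
  shows "inc' (Inr (Att i a)) (Inl e) \<longleftrightarrow> inc e a"
  using assms inc'_new[of "Inr (Att i a)" "Inl e"] by (auto simp: ninc_iff)

lemma ninc_tp'_ne: assumes "u \<in> W'" "ninc u v" shows "tp' u \<noteq> tp' v"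
  using assms(2) unfolding ninc_iff
proof (elim disjE exE conjE)
  fix i assume "Suc i \<le> m - 1" "u = \<gamma> i" "v = \<gamma> (Suc i)"
  then show ?thesis using tp'_\<gamma>[of i] tp'_\<gamma>[of "Suc i"] pt_Suc_ne[of i] by simp
next
  fix i a assume "u = Inr (Att i a)" "v = Inr (PathV i)"
  then show ?thesis using assms(1) Att_in_W' n_minus_1_ne_n by simp
qed (use tp'_Inr[OF assms(1)] n_minus_2_less in fastforce)+

lemma geometry_W': "geometry {1..n} W' tp' inc'"
  unfolding geometry_def
proof (intro conjI ballI)
  fix a assume "a \<in> W'" then show "tp' a \<in> {1..n}" using tp'_range by simp
next
  fix a b assume a: "a \<in> W'" and b: "b \<in> W'"
  show "inc' a b = inc' b a"
    using a b inc_sym inc'_new[of a b] inc'_new[of b a] by (cases a; cases b) auto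
  show "tp' a = tp' b \<longrightarrow> inc' a b = (a = b)"
  proof (cases "\<exists>a' b'. a = Inl a' \<and> b = Inl b'")
    case True
    then show ?thesis using a b inc_same_tp by auto
  next
    case False
    then show ?thesis using inc'_new[OF False] ninc_tp'_ne a b by metis
  qed
qed

lemma inc'_sym: "a \<in> W' \<Longrightarrow> b \<in> W' \<Longrightarrow> inc' a b = inc' b a"
  using geometry_W' unfolding geometry_def by blast

subsection \<open>Properties (F), (I), (V) and (H)\<close>

lemma F_W': "prop_F n W' tp' inc'"
  unfolding prop_F_def
proof (intro ballI impI)
  fix a b assume a: "a \<in> W'" and b: "b \<in> W'" and t: "tp' a \<le> n - 2 \<and> tp' b = n"
  obtain a0 where a0: "a = Inl a0" "a0 \<in> W" using old_if_low a t by blast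
  show "inc' a b" using b
  proof (cases rule: W'_cases)
    case (old b0) then show ?thesis using inc_top a0 t inc_sym by auto
  next
    case (path i) then show ?thesis using inc'_PathV_low a0 t inc'_sym[OF a b] by simp
  next
    case (att i a') then show ?thesis using t n_minus_1_ne_n by simp
  qed
qed

lemma I_W': "prop_I n W' tp'"
  unfolding prop_I_def
proof
  have "{w \<in> W'. tp' w = n} \<subseteq> Inl ` {w\<in>W. tp w = n} \<union> (\<lambda>i. Inr (PathV i)) ` {..m}"
  proof
    fix w assume w: "w \<in> {w \<in> W'. tp' w = n}"
    then have "w \<in> W'" by simp
    then show "w \<in> Inl ` {w\<in>W. tp w = n} \<union> (\<lambda>i. Inr (PathV i)) ` {..m}"
      by (cases rule: W'_cases) (use w n_minus_1_ne_n in \<open>auto dest: new_bounds\<close>)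
  qed
  moreover have "finite {w\<in>W. tp w = n}" using Delta_I unfolding prop_I_def by blast
  ultimately show "finite {w \<in> W'. tp' w = n}" by (simp add: finite_subset)
  have "countable W" using Delta_I unfolding prop_I_def by blast
  then have "countable (Inl ` W \<union> range (\<lambda>i. Inr (PathV i)) \<union> (\<lambda>(i, a). Inr (Att i a)) ` (UNIV \<times> V))"
    using countable_subset[OF VW] by auto
  moreover have "W' \<subseteq> Inl ` W \<union> range (\<lambda>i. Inr (PathV i)) \<union> (\<lambda>(i, a). Inr (Att i a)) ` (UNIV \<times> V)"
    unfolding ext_W_def by auto
  ultimately show "countable W'" by (rule countable_subset[rotated])
qed

lemma V_W': "prop_V n V' W' tp'"
  unfolding prop_V_def
proof
  fix w assume w: "w \<in> W' - V'"
  then have "w \<in> W'" by simp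
  then show "tp' w = n - 1 \<or> tp' w = n"
    by (cases rule: W'_cases) (use w Delta_V pt_cases in \<open>auto simp: prop_V_def\<close>)
qed

text \<open>Since the low-dimensional elements of \<open>\<Delta>'\<close> are old, precursors in \<open>\<Delta>'\<close> can be
  tested against \<open>W\<close>.\<close>

lemma is_precursor'_iff: "is_precursor n V' W' tp' inc' u (Inl b) \<longleftrightarrow>
   b \<in> V \<and> tp b = n - 1 \<and> (\<forall>e\<in>W. 1 \<le> tp e \<and> tp e \<le> n - 2 \<longrightarrow> (inc' u (Inl e) \<longleftrightarrow> inc b e))"
  unfolding is_precursor_def by (auto elim: old_if_low)

lemma is_precursor'_old: "is_precursor n V' W' tp' inc' (Inl a) (Inl b) \<longleftrightarrow> is_precursor n V W tp inc a b"
  unfolding is_precursor'_iff by (simp add: is_precursor_def)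

lemma is_precursor'_unique:
  assumes "is_precursor n V' W' tp' inc' u (Inl b)" "is_precursor n V' W' tp' inc' u (Inl b')"
  shows "b = b'"
  using assms precursor_unique unfolding is_precursor'_iff by auto

lemma prec_in_V:
  assumes "k \<le> m - 1" "pt k = n - 1"
  shows "prec k \<in> V" "tp (prec k) = n - 1" "inc (prec k) z"
proof -
  have h: "case \<gamma> k of Inl e \<Rightarrow> is_precursor n V W tp inc e (prec k)
           | Inr _ \<Rightarrow> prec k \<in> V \<and> tp (prec k) = n - 1 \<and> inc (prec k) z"
    using prec_ok assms unfolding prec_ok_def by blast
  have "prec k \<in> V \<and> tp (prec k) = n - 1 \<and> inc (prec k) z"
  proof (cases "\<gamma> k")
    case (Inl e)
    then have "is_precursor n V W tp inc e (prec k)" "inc e z" using h \<gamma>_Inl_inc_z by auto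
    then show ?thesis using z n3 unfolding is_precursor_def by auto
  next
    case (Inr u) then show ?thesis using h by simp
  qed
  then show "prec k \<in> V" "tp (prec k) = n - 1" "inc (prec k) z" by auto
qed

lemma prec_inj:
  "k \<le> m - 1 \<Longrightarrow> pt k = n - 1 \<Longrightarrow> k' \<le> m - 1 \<Longrightarrow> pt k' = n - 1 \<Longrightarrow> prec k = prec k' \<Longrightarrow> k = k'"
  using prec_ok unfolding prec_ok_def inj_on_def by blast

lemma is_precursor'_\<gamma>:
  assumes "k \<le> m - 1" "pt k = n - 1"
  shows "is_precursor n V' W' tp' inc' (\<gamma> k) (Inl (prec k))"
proof (cases "\<gamma> k")
  case (Inl e)
  then have "is_precursor n V W tp inc e (prec k)"
    using prec_ok assms unfolding prec_ok_def by fastforce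
  then show ?thesis using Inl is_precursor'_old by simp
next
  case (Inr u)
  then have "\<gamma> k = Inr (PathV k)" using \<gamma>_Inr by simp
  moreover have "inc e (prec k) = inc (prec k) e" if "e \<in> W" for e
    using inc_sym that prec_in_V[OF assms] VW by blast
  ultimately show ?thesis
    unfolding is_precursor'_iff using prec_in_V[OF assms] inc'_PathV_low assms(2) n_minus_1_ne_n by simp
qed

lemma is_precursor'_Att:
  assumes "Inr (Att i a) \<in> W'"
  shows "is_precursor n V' W' tp' inc' (Inr (Att i a)) (Inl a)"
  using assms inc'_Att_low inc_sym VW unfolding is_precursor'_iff Att_in_W' by blast

lemma H_W': "prop_H n V' W' tp' inc'"
  unfolding prop_H_def
proof (intro ballI impI)
  fix a assume a: "a \<in> W'" and t: "tp' a = n - 1"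
  then show "\<exists>b. is_precursor n V' W' tp' inc' a b"
  proof (cases rule: W'_cases)
    case (old a0)
    then obtain b0 where "is_precursor n V W tp inc a0 b0" using Delta_H t unfolding prop_H_def by auto
    then show ?thesis using old is_precursor'_old by blast
  next
    case (path i)
    then show ?thesis using is_precursor'_\<gamma>[of i] \<gamma>_new new_bounds[of i] t m_arith by fastforce
  next
    case (att i a0)
    then show ?thesis using is_precursor'_Att a by blast
  qed
qed

subsection \<open>Property (C)\<close>

lemma inc'_upper_cases:
  assumes "inc' u v" "n - 1 \<le> tp' u" "n - 1 \<le> tp' v" "u \<noteq> v"
  obtains (old) a b where "u = Inl a" "v = Inl b" "inc a b"
  | (path) k where "Suc k \<le> m - 1" "{u, v} = {\<gamma> k, \<gamma> (Suc k)}"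
  | (att) j a where "{u, v} = {Inr (Att j a), Inr (PathV j)}"
proof -
  note result = that
  have low: "\<not> (w = Inl e \<and> tp e \<le> n - 2)" if "w \<in> {u, v}" for w e
    using that assms(2,3) n_minus_2_less by auto
  have new_edge: thesis if "ninc p q" "{p, q} = {u, v}" for p q
    using that(1) unfolding ninc_iff
  proof (elim disjE exE conjE)
    fix k assume "Suc k \<le> m - 1" "p = \<gamma> k" "q = \<gamma> (Suc k)"
    then show thesis using result(2)[of k] that(2) by simp
  next
    fix j a assume "p = Inr (Att j a)" "q = Inr (PathV j)"
    then show thesis using result(3)[of j a] that(2) by simp
  qed (use low that(2) in blast)+
  show thesis
  proof (cases "\<exists>a b. u = Inl a \<and> v = Inl b")
    case True
    then show ?thesis using assms(1) result(1) by auto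
  next
    case False
    then have "ninc u v \<or> ninc v u" using inc'_new[OF False] assms(1,4) by simp
    then show ?thesis using new_edge insert_commute by metis
  qed
qed

lemma \<gamma>_next_to_top_Inl:
  assumes "\<gamma> j = Inl a" "tp a = n" "j' \<le> m - 1" "j' = Suc j \<or> j = Suc j'"
  shows "\<exists>b. \<gamma> j' = Inl b"
proof -
  have "a \<noteq> c1" if "tp x = n" using c1_ok(2)[OF that] assms(2) n_minus_1_ne_n by auto
  moreover have "a \<noteq> c2" if "tp y = n" using c2_ok(2)[OF that] assms(2) n_minus_1_ne_n by auto
  ultimately consider "j = 0" "tp x = n" | "j = m - 1" "tp y = n"
    using \<gamma>_Inl_cases[OF assms(1)] assms(2) by blast
  then show ?thesis
  proof cases
    case 1
    then show ?thesis using assms(4) \<gamma>_1 by auto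
  next
    case 2
    then have "j' = m - 2" using assms(3,4) m4 by auto
    then show ?thesis using \<gamma>_m2 2 by auto
  qed
qed

lemma no_new_hyperplane_on_old_top:
  assumes u: "u = Inr w" "tp' u = n - 1" and a: "tp a = n"
  shows "\<not> inc' u (Inl a)"
proof
  assume "inc' u (Inl a)"
  moreover have "n - 1 \<le> tp' u" "n - 1 \<le> tp' (Inl a)" "u \<noteq> Inl a" using u a by simp_all
  ultimately show False
  proof (cases rule: inc'_upper_cases)
    case (path k)
    then consider "\<gamma> (Suc k) = Inl a" "\<gamma> k = u" | "\<gamma> k = Inl a" "\<gamma> (Suc k) = u"
      by (auto simp: doubleton_eq_iff)
    then show False
      using \<gamma>_next_to_top_Inl[of "Suc k" a k] \<gamma>_next_to_top_Inl[of k a "Suc k"] path(1) a u(1)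
      by cases auto
  qed (use u a n_minus_1_ne_n in \<open>auto simp: doubleton_eq_iff\<close>)
qed

lemma C_W'_old:
  assumes a: "a \<in> W" "tp a = n" and b: "b \<in> V" "tp b = n - 1"
  shows "\<exists>!w. w \<in> W' \<and> tp' w = n - 1 \<and> is_precursor n V' W' tp' inc' w (Inl b) \<and> inc' w (Inl a)"
proof -
  obtain w0 where w0: "w0 \<in> W \<and> tp w0 = n - 1 \<and> is_precursor n V W tp inc w0 b \<and> inc w0 a"
    and uniq: "\<And>w. w \<in> W \<and> tp w = n - 1 \<and> is_precursor n V W tp inc w b \<and> inc w a \<Longrightarrow> w = w0"
    using Delta_C a b unfolding prop_C_def by metis
  show ?thesis
  proof (rule ex1I[of _ "Inl w0"])
    show "Inl w0 \<in> W' \<and> tp' (Inl w0) = n - 1 \<and> is_precursor n V' W' tp' inc' (Inl w0) (Inl b) \<and>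
        inc' (Inl w0) (Inl a)"
      using w0 is_precursor'_old by simp
    fix w assume w: "w \<in> W' \<and> tp' w = n - 1 \<and> is_precursor n V' W' tp' inc' w (Inl b) \<and> inc' w (Inl a)"
    show "w = Inl w0"
    proof (cases w)
      case (Inl w')
      then show ?thesis using w uniq[of w'] is_precursor'_old by simp
    next
      case (Inr w')
      then show ?thesis using no_new_hyperplane_on_old_top w a by blast
    qed
  qed
qed

lemma neighbours_of_new_top:
  assumes "tp' w = n - 1" "new i" "pt i = n" "inc' w (Inr (PathV i))"
  shows "w = \<gamma> (i - 1) \<or> w = \<gamma> (Suc i) \<or> (\<exists>a. w = Inr (Att i a))"
proof -
  have "n - 1 \<le> tp' w" "n - 1 \<le> tp' (Inr (PathV i))" "w \<noteq> Inr (PathV i)"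
    using assms(1,3) n_minus_1_ne_n by auto
  with assms(4) show ?thesis
  proof (cases rule: inc'_upper_cases)
    case (path k)
    then have "\<gamma> k = Inr (PathV i) \<and> w = \<gamma> (Suc k) \<or> \<gamma> (Suc k) = Inr (PathV i) \<and> w = \<gamma> k"
      by (auto simp: doubleton_eq_iff)
    then show ?thesis using \<gamma>_Inr by fastforce
  qed (use assms pt_ge n_minus_1_ne_n in \<open>auto simp: doubleton_eq_iff\<close>)
qed

lemma inc'_\<gamma>_Suc:
  assumes "Suc k \<le> m - 1" "\<not> (\<exists>a b. \<gamma> k = Inl a \<and> \<gamma> (Suc k) = Inl b)"
  shows "inc' (\<gamma> k) (\<gamma> (Suc k))" "inc' (\<gamma> (Suc k)) (\<gamma> k)"
proof -
  have "ninc (\<gamma> k) (\<gamma> (Suc k))" using assms(1) unfolding ninc_iff by blast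
  then show "inc' (\<gamma> k) (\<gamma> (Suc k))" "inc' (\<gamma> (Suc k)) (\<gamma> k)"
    using inc'_new[OF assms(2)] inc'_new[of "\<gamma> (Suc k)" "\<gamma> k"] assms(2) by auto
qed

lemma path_neighbours_of_new_top:
  assumes "new i" "pt i = n"
  shows "i - 1 \<le> m - 1" "Suc i \<le> m - 1" "pt (i - 1) = n - 1" "pt (Suc i) = n - 1"
    "prec (i - 1) \<noteq> prec (Suc i)"
    "inc' (\<gamma> (i - 1)) (Inr (PathV i))" "inc' (\<gamma> (Suc i)) (Inr (PathV i))"
proof -
  show il: "i - 1 \<le> m - 1" "Suc i \<le> m - 1" using new_bounds[OF assms(1)] m4 by auto
  have "Suc (i - 1) = i" using new_bounds[OF assms(1)] by simp
  then show pt: "pt (i - 1) = n - 1" "pt (Suc i) = n - 1"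
    using pt_Suc[of "i - 1"] pt_Suc[of i] pt_cases[of "i - 1"] assms(2) n_minus_1_ne_n
    by (auto split: if_splits)
  show "prec (i - 1) \<noteq> prec (Suc i)" using prec_inj[OF il(1) pt(1) il(2) pt(2)] by auto
  show "inc' (\<gamma> (i - 1)) (Inr (PathV i))" "inc' (\<gamma> (Suc i)) (Inr (PathV i))"
    using inc'_\<gamma>_Suc[of "i - 1"] inc'_\<gamma>_Suc[of i] il \<open>Suc (i - 1) = i\<close> \<gamma>_new[OF assms(1)]
    by simp_all
qed

text \<open>The element of type \<open>n - 1\<close> with precursor \<open>b\<close> on the new element \<open>x\<^sub>i\<close> of type \<open>n\<close>.\<close>

definition rep :: "nat \<Rightarrow> 'e \<Rightarrow> 'e + 'e newel" where
  "rep i b = (if b = prec (i - 1) then \<gamma> (i - 1) else if b = prec (Suc i) then \<gamma> (Suc i)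
    else Inr (Att i b))"

lemma rep_props:
  assumes i: "new i" "pt i = n" and b: "b \<in> V" "tp b = n - 1"
  shows "rep i b \<in> W' \<and> tp' (rep i b) = n - 1 \<and> is_precursor n V' W' tp' inc' (rep i b) (Inl b) \<and>
    inc' (rep i b) (Inr (PathV i))"
proof (cases "b = prec (i - 1) \<or> b = prec (Suc i)")
  case True
  then show ?thesis
    using path_neighbours_of_new_top[OF i] \<gamma>_in_W' tp'_\<gamma> is_precursor'_\<gamma> by (auto simp: rep_def)
next
  case False
  then have "Inr (Att i b) \<in> W'" using Att_in_W' i b by simp
  moreover have "inc' (Inr (Att i b)) (Inr (PathV i))"
    using inc'_new[of "Inr (Att i b)" "Inr (PathV i)"] by (simp add: ninc_iff)
  ultimately show ?thesis using False is_precursor'_Att by (simp add: rep_def)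
qed

lemma rep_unique:
  assumes i: "new i" "pt i = n"
    and w: "w \<in> W'" "tp' w = n - 1" "is_precursor n V' W' tp' inc' w (Inl b)"
      "inc' w (Inr (PathV i))"
  shows "w = rep i b"
proof -
  note nb = path_neighbours_of_new_top[OF i]
  consider "w = \<gamma> (i - 1)" | "w = \<gamma> (Suc i)" | a where "w = Inr (Att i a)"
    using neighbours_of_new_top[OF w(2) i w(4)] by blast
  then show ?thesis
  proof cases
    case 1
    then have "b = prec (i - 1)" using is_precursor'_unique is_precursor'_\<gamma>[OF nb(1,3)] w(3) by blast
    then show ?thesis using 1 by (simp add: rep_def)
  next
    case 2
    then have "b = prec (Suc i)" using is_precursor'_unique is_precursor'_\<gamma>[OF nb(2,4)] w(3) by blast
    then show ?thesis using 2 nb(5) by (simp add: rep_def)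
  next
    case 3
    then have "Inr (Att i a) \<in> W'" using w(1) by simp
    then have "b = a" using is_precursor'_unique[OF _ is_precursor'_Att] w(3) 3 by blast
    then show ?thesis using 3 \<open>Inr (Att i a) \<in> W'\<close> Att_in_W' by (simp add: rep_def)
  qed
qed

lemma C_W': "prop_C n V' W' tp' inc'"
  unfolding prop_C_def
proof (intro ballI impI)
  fix a b assume a: "a \<in> W'" "tp' a = n" and b: "b \<in> V'" "tp' b = n - 1"
  obtain b0 where b0: "b = Inl b0" "b0 \<in> V" "tp b0 = n - 1" using b by auto
  show "\<exists>!w. w \<in> W' \<and> tp' w = n - 1 \<and> is_precursor n V' W' tp' inc' w b \<and> inc' w a"
    using a(1)
  proof (cases rule: W'_cases)
    case (old a0)
    then show ?thesis using C_W'_old a b0 by simp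
  next
    case (path i)
    then have "pt i = n" using a by simp
    show ?thesis
    proof (rule ex1I[of _ "rep i b0"])
      show "rep i b0 \<in> W' \<and> tp' (rep i b0) = n - 1 \<and> is_precursor n V' W' tp' inc' (rep i b0) b \<and>
          inc' (rep i b0) a"
        using rep_props[OF path(2) \<open>pt i = n\<close> b0(2,3)] b0(1) path(1) by simp
      fix w assume "w \<in> W' \<and> tp' w = n - 1 \<and> is_precursor n V' W' tp' inc' w b \<and> inc' w a"
      then show "w = rep i b0" using rep_unique[OF path(2) \<open>pt i = n\<close>] b0(1) path(1) by blast
    qed
  qed (use a n_minus_1_ne_n in simp)
qed

subsection \<open>Property (P)\<close>

abbreviation R :: "'e \<Rightarrow> 'e + 'e newel \<Rightarrow> 'e + 'e newel \<Rightarrow> bool" where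
  "R z0 \<equiv> res_adj n W' tp' inc' (Inl z0)"

lemma R_sym: "R z0 u v \<Longrightarrow> R z0 v u"
  by (rule res_adj_sym[OF geometry_W'])

lemma R_facts:
  assumes "R z0 u v"
  shows "u \<in> W'" "n - 1 \<le> tp' u" "n - 1 \<le> tp' v" "u \<noteq> v" "inc' u v" "inc' u (Inl z0)"
  using assms n_minus_1_ne_n unfolding res_adj_def res_vertices_def by auto

lemma R_Inl: "R z0 (Inl a) (Inl b) \<Longrightarrow> res_adj n W tp inc z0 a b"
  unfolding res_adj_def res_vertices_def by simp

lemma R_Att: "R z0 (Inr (Att j a)) w \<Longrightarrow> w = Inr (PathV j)"
  using R_facts[of z0 "Inr (Att j a)" w]
  by (auto elim: inc'_upper_cases simp: doubleton_eq_iff)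

lemma R_\<gamma>_inner:
  assumes i: "0 < i" "i < m - 1" and r: "R z0 (\<gamma> i) w" and w: "\<And>j a. w \<noteq> Inr (Att j a)"
  shows "w = \<gamma> (i - 1) \<or> w = \<gamma> (Suc i)"
  using R_facts(5,2-4)[OF r]
proof (cases rule: inc'_upper_cases)
  case (old a b)
  then have a: "(i = 1 \<and> tp x = n \<and> a = c1) \<or> (i = m - 2 \<and> tp y = n \<and> a = c2)"
    using \<gamma>_Inl_cases[of i a] i by auto
  have "tp b \<noteq> tp a" "b \<in> W" "n - 1 \<le> tp b"
    using r old unfolding res_adj_def res_vertices_def by auto
  then have "b \<in> W" "tp b = n"
    using a c1_ok(2) c2_ok(2) tp_range[of b] by auto
  then show ?thesis using a old c1_ok(5) c2_ok(5) \<gamma>_0 \<gamma>_last m_arith(6) by auto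
next
  case (path k)
  then have "\<gamma> i = \<gamma> k \<and> w = \<gamma> (Suc k) \<or> \<gamma> i = \<gamma> (Suc k) \<and> w = \<gamma> k"
    by (auto simp: doubleton_eq_iff)
  then show ?thesis using \<gamma>_inj[of i k] \<gamma>_inj[of i "Suc k"] path(1) i by fastforce
qed (use w in \<open>auto simp: doubleton_eq_iff\<close>)

text \<open>Two distinct hyperplanes meet in only one element of type \<open>n - 2\<close>, and \<open>\<gamma>\<close>
  has two type-\<open>(n - 1)\<close> vertices with distinct precursors.\<close>

lemma \<gamma>_residue_unique:
  assumes z0: "z0 \<in> W" "tp z0 = n - 2" and all: "\<And>k. k \<le> m - 1 \<Longrightarrow> inc' (\<gamma> k) (Inl z0)"
  shows "z0 = z"
proof -
  have prec_z0: "inc (prec k) z0" if "k \<le> m - 1" "pt k = n - 1" for k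
    using is_precursor'_\<gamma>[OF that] all[OF that(1)] z0 n3 unfolding is_precursor'_iff by auto
  obtain k1 k2 where k: "k1 \<le> m - 1" "k2 \<le> m - 1" "pt k1 = n - 1" "pt k2 = n - 1" "k1 \<noteq> k2"
  proof (cases "tp x = n")
    case True
    then have "pt 1 = n - 1" "pt 3 = n - 1" using n_minus_1_ne_n by (auto simp: ptype_def)
    then show ?thesis using that[of 1 3] m4 by simp
  next
    case False
    then have "pt 0 = n - 1" "pt 2 = n - 1" by (auto simp: ptype_def)
    then show ?thesis using that[of 0 2] m4 by simp
  qed
  then have "prec k1 \<noteq> prec k2" using prec_inj by blast
  then show ?thesis
    using common_codim2_unique[of "prec k1" "prec k2" z0 z] prec_in_V[OF k(1,3)] prec_in_V[OF k(2,4)]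
      prec_z0 k in_V_if_low z0 z z_in_V
    by simp
qed

text \<open>A cycle of length \<open>L\<close> in the residue of \<open>z0\<close>, unrolled to an \<open>L\<close>-periodic sequence
  indexed by the integers, so that it can be traversed in both directions.\<close>

definition periodic_cycle :: "'e \<Rightarrow> nat \<Rightarrow> (int \<Rightarrow> 'e + 'e newel) \<Rightarrow> bool" where
  "periodic_cycle z0 L P \<longleftrightarrow> 3 \<le> L \<and> (\<forall>r. R z0 (P r) (P (r + 1))) \<and>
     (\<forall>a b. P a = P b \<longleftrightarrow> a mod int L = b mod int L)"

lemma periodic_cycleD:
  assumes "periodic_cycle z0 L P"
  shows "3 \<le> L" "R z0 (P r) (P (r + 1))" "P a = P b \<longleftrightarrow> a mod int L = b mod int L"
  using assms unfolding periodic_cycle_def by blast+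

lemma periodic_cycle_reverse:
  assumes "periodic_cycle z0 L P"
  shows "periodic_cycle z0 L (\<lambda>r. P (- r))"
  unfolding periodic_cycle_def
proof (intro conjI allI)
  fix r a b :: int
  show "R z0 (P (- r)) (P (- (r + 1)))"
    using R_sym periodic_cycleD(2)[OF assms, of "- r - 1"] by simp
  have "(- a) mod int L = (- b) mod int L \<longleftrightarrow> a mod int L = b mod int L"
    using mod_eq_dvd_iff[of "- a" "int L" "- b"] mod_eq_dvd_iff[of a "int L" b] dvd_diff_commute
    by simp
  then show "P (- a) = P (- b) \<longleftrightarrow> a mod int L = b mod int L"
    using periodic_cycleD(3)[OF assms] by simp
qed (use periodic_cycleD(1)[OF assms] in simp)

lemma periodic_cycle_no_backtrack:
  assumes "periodic_cycle z0 L P"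
  shows "P (r + 2) \<noteq> P r"
  using int_mod_eq_imp_dist_ge[of r "int L" "r + 2"] periodic_cycleD(1,3)[OF assms] by auto

lemma periodic_cycle_not_Att:
  assumes P: "periodic_cycle z0 L P"
  shows "P r \<noteq> Inr (Att j a)"
proof
  assume Pr: "P r = Inr (Att j a)"
  have "R z0 (Inr (Att j a)) (P (r + 1))" "R z0 (Inr (Att j a)) (P (r - 1))"
    using periodic_cycleD(2)[OF P, of r] R_sym[OF periodic_cycleD(2)[OF P, of "r - 1"]] Pr by simp_all
  then have "P (r + 1) = Inr (PathV j)" "P (r - 1) = Inr (PathV j)" using R_Att by blast+
  then show False using periodic_cycle_no_backtrack[OF P, of "r - 1"] by (simp add: algebra_simps)
qed

lemma periodic_cycle_of_res_cycle:
  assumes "res_cycle n W' tp' inc' (Inl z0) L"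
  obtains P where "periodic_cycle z0 L P"
proof -
  obtain p where L: "3 \<le> L" and p: "inj_on p {..<L}" "\<And>i. i < L \<Longrightarrow> R z0 (p i) (p (Suc i mod L))"
    using assms unfolding res_cycle_def by blast
  define P where "P r = p (nat (r mod int L))" for r
  have idx: "nat ((r + 1) mod int L) = Suc (nat (r mod int L)) mod L" for r
  proof -
    have "(r + 1) mod int L = (r mod int L + 1) mod int L" by (rule mod_add_left_eq[symmetric])
    also have "\<dots> = int (Suc (nat (r mod int L)) mod L)" using L by (simp add: zmod_int add.commute)
    finally show ?thesis by simp
  qed
  have "periodic_cycle z0 L P"
    unfolding periodic_cycle_def
  proof (intro conjI allI)
    fix r a b :: int
    show "R z0 (P r) (P (r + 1))" unfolding P_def idx using p(2) L by (simp add: nat_less_iff)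
    have "nat (a mod int L) \<in> {..<L}" "nat (b mod int L) \<in> {..<L}" using L by (auto simp: nat_less_iff)
    then show "P a = P b \<longleftrightarrow> a mod int L = b mod int L"
      using p(1) L unfolding P_def inj_on_def by (metis eq_nat_nat_iff pos_mod_sign of_nat_0_less_iff
          less_le_trans zero_less_numeral)
  qed (rule L)
  then show ?thesis by (rule that)
qed

lemma res_cycle_of_old_periodic_cycle:
  assumes P: "periodic_cycle z0 L P" and old: "\<And>r. isl (P r)"
  shows "res_cycle n W tp inc z0 L"
proof -
  define q where "q i = projl (P (int i))" for i
  have Pq: "P (int i) = Inl (q i)" for i using old[of "int i"] by (simp add: q_def)
  have L: "3 \<le> L" using periodic_cycleD(1)[OF P] .
  have "inj_on q {..<L}"
  proof (rule inj_onI)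
    fix i j assume "i \<in> {..<L}" "j \<in> {..<L}" "q i = q j"
    then show "i = j" using periodic_cycleD(3)[OF P, of "int i" "int j"] Pq by auto
  qed
  moreover have "res_adj n W tp inc z0 (q i) (q (Suc i mod L))" if "i < L" for i
  proof -
    have "(int i + 1) mod int L = int (Suc i mod L) mod int L" by (simp add: zmod_int add.commute)
    then have "P (int (Suc i mod L)) = P (int i + 1)" using periodic_cycleD(3)[OF P] by simp
    then show ?thesis using periodic_cycleD(2)[OF P, of "int i"] Pq R_Inl by metis
  qed
  ultimately show ?thesis using L unfolding res_cycle_def by blast
qed

text \<open>Inner vertices of \<open>\<gamma>\<close> have only their two \<open>\<gamma>\<close>-neighbours in a residue, so a cycle
  stepping along \<open>\<gamma>\<close> keeps following it, here along the indices \<open>g 0, g 1, \<dots>\<close>.\<close>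

lemma periodic_cycle_follows_\<gamma>:
  assumes P: "periodic_cycle z0 L P"
    and start: "P j = \<gamma> (g 0)" "P (j + 1) = \<gamma> (g 1)"
    and g: "\<And>s. Suc s < N \<Longrightarrow> 0 < g (Suc s) \<and> g (Suc s) < m - 1 \<and>
      {g s, g (Suc (Suc s))} = {g (Suc s) - 1, Suc (g (Suc s))}"
    and s: "s \<le> N"
  shows "P (j + int s) = \<gamma> (g s)"
proof -
  have step: "P (j + int s) = \<gamma> (g s) \<and> P (j + int s + 1) = \<gamma> (g (Suc s))" if "Suc s \<le> N" for s
    using that
  proof (induction s)
    case 0
    then show ?case using start by simp
  next
    case (Suc s)
    then have IH: "P (j + int s) = \<gamma> (g s)" "P (j + int (Suc s)) = \<gamma> (g (Suc s))"
      by (simp_all add: algebra_simps)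
    note gs = g[of s] Suc.prems
    have "R z0 (\<gamma> (g (Suc s))) (P (j + int (Suc s) + 1))"
      using periodic_cycleD(2)[OF P, of "j + int (Suc s)"] IH(2) by simp
    then have "P (j + int (Suc s) + 1) \<in> \<gamma> ` {g s, g (Suc (Suc s))}"
      using R_\<gamma>_inner periodic_cycle_not_Att[OF P] gs by auto
    moreover have "P (j + int (Suc s) + 1) \<noteq> \<gamma> (g s)"
      using periodic_cycle_no_backtrack[OF P, of "j + int s"] IH(1) by (simp add: algebra_simps)
    ultimately show ?case using IH(2) by auto
  qed
  show ?thesis
  proof (cases s)
    case 0
    then show ?thesis using start by simp
  next
    case (Suc s')
    then show ?thesis using step[of s'] s by (simp add: add_ac)
  qed
qed

lemma periodic_cycle_along_\<gamma>:
  assumes P: "periodic_cycle z0 L P" and i: "0 < i" "i < m - 1"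
    and nb: "P j = \<gamma> i" "P (j + 1) = \<gamma> (Suc i)" "P (j - 1) = \<gamma> (i - 1)"
  shows "k \<le> m - 1 \<Longrightarrow> P (j - int i + int k) = \<gamma> k"
proof -
  have up: "P (j + int s) = \<gamma> (i + s)" if "s \<le> m - 1 - i" for s
    by (rule periodic_cycle_follows_\<gamma>[OF P, where g = "\<lambda>s. i + s"]) (use nb that in auto)
  have down: "P (j - int s) = \<gamma> (i - s)" if "s \<le> i" for s
    using periodic_cycle_follows_\<gamma>[OF periodic_cycle_reverse[OF P], where g = "\<lambda>s. i - s" and N = i
        and j = "- j"] nb that i
    by (fastforce simp: doubleton_eq_iff)
  assume k: "k \<le> m - 1"
  show "P (j - int i + int k) = \<gamma> k"
  proof (cases "i \<le> k")
    case True
    then show ?thesis using up[of "k - i"] k by (simp add: of_nat_diff algebra_simps)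
  next
    case False
    then show ?thesis using down[of "i - k"] by (simp add: of_nat_diff algebra_simps)
  qed
qed

lemma periodic_cycle_contains_\<gamma>:
  assumes P: "periodic_cycle z0 L P" and j: "P j = Inr (PathV i)"
  obtains P' J where "periodic_cycle z0 L P'" "\<And>k. k \<le> m - 1 \<Longrightarrow> P' (J + int k) = \<gamma> k"
proof -
  have "new i" using R_facts(1)[OF periodic_cycleD(2)[OF P, of j]] j by simp
  then have i: "0 < i" "i < m - 1" "P j = \<gamma> i" using new_bounds[of i] \<gamma>_new[of i] j m4 by auto
  have "P (j + 1) \<in> {\<gamma> (i - 1), \<gamma> (Suc i)}" "P (j - 1) \<in> {\<gamma> (i - 1), \<gamma> (Suc i)}"
    using R_\<gamma>_inner[OF i(1,2)] periodic_cycleD(2)[OF P] R_sym periodic_cycle_not_Att[OF P] i(3)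
    by (metis diff_add_cancel insert_iff)+
  moreover have "P (j + 1) \<noteq> P (j - 1)"
    using periodic_cycle_no_backtrack[OF P, of "j - 1"] by (simp add: algebra_simps)
  ultimately consider "P (j + 1) = \<gamma> (Suc i)" "P (j - 1) = \<gamma> (i - 1)"
    | "P (j - 1) = \<gamma> (Suc i)" "P (j + 1) = \<gamma> (i - 1)"
    by auto
  then show ?thesis
  proof cases
    case 1
    then show ?thesis by (intro that[OF P]) (rule periodic_cycle_along_\<gamma>[OF P i(1,2,3)])
  next
    case 2
    let ?Q = "\<lambda>r. P (- r)"
    have "?Q (- j) = \<gamma> i" "?Q (- j + 1) = \<gamma> (Suc i)" "?Q (- j - 1) = \<gamma> (i - 1)"
      using 2 i(3) by (simp_all add: algebra_simps)
    then show ?thesis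
      using that[OF periodic_cycle_reverse[OF P]]
        periodic_cycle_along_\<gamma>[OF periodic_cycle_reverse[OF P] i(1,2)]
      by blast
  qed
qed

lemma periodic_cycle_along_\<gamma>_rest_old:
  assumes P: "periodic_cycle z0 L P" and along: "\<And>k. k \<le> m - 1 \<Longrightarrow> P (J + int k) = \<gamma> k"
  shows "m - 1 < L" "\<And>r. m - 1 \<le> r \<Longrightarrow> r \<le> L \<Longrightarrow> isl (P (J + int r))"
proof -
  show "m - 1 < L"
  proof (rule ccontr)
    assume "\<not> m - 1 < L"
    then have "L = 0"
      using \<gamma>_inj[of L 0] along[of L] along[of 0] periodic_cycleD(3)[OF P, of "J + int L" J] by simp
    then show False using periodic_cycleD(1)[OF P] by simp
  qed
  fix r assume r: "m - 1 \<le> r" "r \<le> L"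
  show "isl (P (J + int r))"
  proof (rule ccontr)
    assume "\<not> isl (P (J + int r))"
    then obtain i where Pr: "P (J + int r) = Inr (PathV i)"
      using periodic_cycle_not_Att[OF P] by (metis newel.exhaust sum.collapse(2))
    then have "new i" using R_facts(1)[OF periodic_cycleD(2)[OF P]] by (metis PathV_in_W')
    then have i: "1 \<le> i" "i < m - 1" using new_bounds[of i] m4 by auto
    then have "P (J + int i) = P (J + int r)" using along[of i] \<gamma>_new[OF \<open>new i\<close>] Pr by simp
    then show False
      using int_mod_eq_imp_dist_ge[of "J + int i" "int L" "J + int r"] periodic_cycleD(3)[OF P] r i
      by auto
  qed
qed

lemma periodic_cycle_along_\<gamma>_closing_walk:
  assumes P: "periodic_cycle z0 L P" and along: "\<And>k. k \<le> m - 1 \<Longrightarrow> P (J + int k) = \<gamma> k"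
  shows "res_walk n W tp inc z0 (L - (m - 1)) y x"
proof -
  note old = periodic_cycle_along_\<gamma>_rest_old[OF P along]
  define w where "w l = projl (P (J + int (m - 1) + int l))" for l
  have Pw: "P (J + int (m - 1) + int l) = Inl (w l)" if "l \<le> L - (m - 1)" for l
    using old(2)[of "m - 1 + l"] that old(1) by (simp add: w_def add.assoc)
  show ?thesis
    unfolding res_walk_def
  proof (intro exI[of _ w] conjI allI impI)
    show "w 0 = y" using Pw[of 0] along[of "m - 1"] \<gamma>_last by simp
    have "P (J + int L) = P J" using periodic_cycleD(3)[OF P] by simp
    then show "w (L - (m - 1)) = x"
      using Pw[of "L - (m - 1)"] along[of 0] \<gamma>_0 old(1) by (simp add: of_nat_diff)
    fix l
    assume l: "l < L - (m - 1)"
    then show "res_adj n W tp inc z0 (w l) (w (Suc l))"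
      using periodic_cycleD(2)[OF P, of "J + int (m - 1) + int l"] Pw[of l] Pw[of "Suc l"] R_Inl
      by (simp add: add_ac)
  next
    fix l
    assume "l \<le> L - (m - 1)"
    then show "w l \<in> res_vertices n W tp inc z0"
      using R_facts(1,2,6)[OF periodic_cycleD(2)[OF P, of "J + int (m - 1) + int l"]] Pw[of l]
        tp_range[of "w l"]
      by (auto simp: res_vertices_def)
  qed
qed

lemma no_short_periodic_cycle_along_\<gamma>:
  assumes z0: "z0 \<in> W" "tp z0 = n - 2" and P: "periodic_cycle z0 L P" and L: "L < 2 * m"
    and along: "\<And>k. k \<le> m - 1 \<Longrightarrow> P (J + int k) = \<gamma> k"
  shows False
proof -
  have "z0 = z"
    using \<gamma>_residue_unique[OF z0] R_facts(6)[OF periodic_cycleD(2)[OF P]] along by metis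
  then have "res_walk n W tp inc z (L - (m - 1)) x y"
    using res_walk_rev[OF geom periodic_cycle_along_\<gamma>_closing_walk[OF P along]] by blast
  moreover have "L - (m - 1) \<le> m" using L by simp
  ultimately show False using far by blast
qed

lemma P_W': "prop_P n m W' tp' inc'"
  unfolding prop_P_def
proof (intro ballI impI allI notI)
  fix z' k assume z': "z' \<in> W'" "tp' z' = n - 2" and "k < m"
    and cyc: "res_cycle n W' tp' inc' z' (2 * k)"
  obtain z0 where z0: "z' = Inl z0" "z0 \<in> W" by (rule old_if_low[OF z'(1)]) (use z'(2) in simp)
  have "tp z0 = n - 2" using z'(2) z0(1) by simp
  obtain P where P: "periodic_cycle z0 (2 * k) P"
    by (rule periodic_cycle_of_res_cycle) (use cyc z0(1) in simp)
  have "2 * k < 2 * m" using \<open>k < m\<close> by simp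
  show False
  proof (cases "\<forall>r. isl (P r)")
    case True
    then have "res_cycle n W tp inc z0 (2 * k)" using res_cycle_of_old_periodic_cycle[OF P] by blast
    moreover have "\<not> res_cycle n W tp inc z0 (2 * k)"
      using Delta_P z0(2) \<open>tp z0 = n - 2\<close> \<open>k < m\<close> unfolding prop_P_def by blast
    ultimately show False by contradiction
  next
    case False
    then obtain r where "\<not> isl (P r)" by blast
    then have "P r = Inr (projr (P r))" by simp
    then obtain i where i: "P r = Inr (PathV i)"
      using periodic_cycle_not_Att[OF P] by (cases "projr (P r)") auto
    obtain P' J where "periodic_cycle z0 (2 * k) P'" "\<And>k'. k' \<le> m - 1 \<Longrightarrow> P' (J + int k') = \<gamma> k'"
      using periodic_cycle_contains_\<gamma>[OF P i] by blast
    then show False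
      using no_short_periodic_cycle_along_\<gamma>[OF z0(2) \<open>tp z0 = n - 2\<close> _ \<open>2 * k < 2 * m\<close>] by blast
  qed
qed

lemma all_props_W': "all_props n m V' W' tp' inc'"
  unfolding all_props_def using F_W' I_W' V_W' P_W' H_W' C_W' by blast

end

theorem mainTheorem5:
  fixes n m :: nat
    and W V :: "'e set" and tp :: "'e \<Rightarrow> nat" and inc :: "'e \<Rightarrow> 'e \<Rightarrow> bool"
    and sp :: "'e \<Rightarrow> (nat \<Rightarrow> 'k::division_ring) set"
    and x y z :: 'e
  assumes n3: "3 \<le> n" and m4: "4 \<le> m"
    and K_inf: "infinite (UNIV :: 'k set)" and K_count: "countable (UNIV :: 'k set)"
    and geom: "geometry {1..n} W tp inc"
    and VW: "V \<subseteq> W"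
    and sp_bij: "bij_betw sp V {U. \<exists>d. 1 \<le> d \<and> d \<le> n - 1 \<and> subspace_dim n d U}"
    and sp_tp: "\<forall>v\<in>V. subspace_dim n (tp v) (sp v)"
    and sp_inc: "\<forall>v\<in>V. \<forall>w\<in>V. inc v w \<longleftrightarrow> (sp v \<subseteq> sp w \<or> sp w \<subseteq> sp v)"
    and props: "all_props n m V W tp inc"
    and z: "z \<in> W" "tp z = n - 2"
    and x: "x \<in> W" "tp x = n - 1 \<or> tp x = n" "inc x z"
    and y: "y \<in> W" "tp y = n - 1 \<or> tp y = n" "inc y z"
    and parity: "odd m \<longrightarrow> tp x = tp y" "even m \<longrightarrow> tp x \<noteq> tp y"
    and far: "\<forall>L\<le>m. \<not> res_walk n W tp inc z L x y"
  shows "(tp x = n \<longrightarrow> (\<exists>c. end_ok n W tp inc z x c)) \<and>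
         (tp y = n \<longrightarrow> (\<exists>c. end_ok n W tp inc z y c)) \<and>
         (\<forall>c1 c2 prec.
            (tp x = n \<longrightarrow> end_ok n W tp inc z x c1) \<and>
            (tp y = n \<longrightarrow> end_ok n W tp inc z y c2) \<and>
            prec_ok n m V W tp inc z x y c1 c2 prec \<longrightarrow>
            geometry {1..n} (ext_W n m V W tp x y prec) (ext_tp n tp x)
                     (ext_inc n m tp inc x y c1 c2 prec) \<and>
            all_props n m (Inl ` V) (ext_W n m V W tp x y prec) (ext_tp n tp x)
                     (ext_inc n m tp inc x y c1 c2 prec))"
proof -
  interpret far_pair n m W V tp inc sp x y z
    by unfold_locales (fact assms)+
  show ?thesis
  proof (intro conjI allI impI)
    show "\<exists>c. end_ok n W tp inc z x c" if "tp x = n" using exists_end_ok z x(1) that by blast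
    show "\<exists>c. end_ok n W tp inc z y c" if "tp y = n" using exists_end_ok z y(1) that by blast
    fix c1 c2 prec
    assume "(tp x = n \<longrightarrow> end_ok n W tp inc z x c1) \<and> (tp y = n \<longrightarrow> end_ok n W tp inc z y c2) \<and>
      prec_ok n m V W tp inc z x y c1 c2 prec"
    then interpret extension n m W V tp inc sp x y z c1 c2 prec
      by unfold_locales blast+
    show "geometry {1..n} W' tp' inc'" by (rule geometry_W')
    show "all_props n m V' W' tp' inc'" by (rule all_props_W')
  qed
qed

end
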